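(* Let $\Phi=(V,[q]^V,\mathcal{C})$ be a $(k,d)$-CSP formula with atomic constraints and $h$ a projection scheme satisfying the entropy criterion with parameters $0<\beta<\alpha<1$. If $k\log q\ge\frac1\beta\log(3000q^2d^6k^6)$, then for any $X,Y\in\Sigma$ that differ only at a single variable $v_0\in V$, $$\sum_{v\in V\setminus\{v_0\}}d_{TV}\big(\nu_v^{X_{V\setminus\{v\}}},\nu_v^{Y_{V\setminus\{v\}}}\big)\le\frac12.$$
   Context: A $(k,d)$-CSP formula: variables $V$ all with domain $[q]$, constraints on exactly $k$ variables each, each variable in at most $d$ constraints; atomic means each constraint is violated by exactly one configuration of its variables. $\mu$: uniform distribution over satisfying assignments. Projection scheme $h_v:[q]\to\Sigma_v$, $q_v=q$, $s_v=|\Sigma_v|$, $\Sigma=\bigotimes_v\Sigma_v$. Entropy criterion with $(\alpha,\beta)$: $\lfloor q_v/s_v\rfloor\le|h_v^{-1}(y)|\le\lceil q_v/s_v\rceil$ for all $v,y$; and for each $c$: $\sum_{v\in\mathrm{vbl}(c)}\log\lceil q_v/s_v\rceil\le\alpha\sum_{v\in\mathrm{vbl}(c)}\log q_v$, $\sum_{v\in\mathrm{vbl}(c)}\log\lfloor q_v/s_v\rfloor\ge\beta\sum_{v\in\mathrm{vbl}(c)}\log q_v$. $\nu$ is the distribution of $(h_v(X_v))_v$ for $X\sim\mu$; $\nu_v^{\sigma}$ is the marginal of $\nu$ at $v$ conditioned on the values at $V\setminus\{v\}$ being $\sigma$. $d_{TV}$ is total variation distance. $\log$ base 2. *)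

theory Defs
  imports "HOL-Analysis.Analysis"
begin

text \<open>An atomic CSP formula on variable set V with domain {0..<q}: constraints are indexed
  by a set C; constraint c acts on the variables vbl c and is violated exactly by the
  single configuration forb c restricted to vbl c.\<close>

definition sat_assign ::
  "'v set \<Rightarrow> nat \<Rightarrow> 'c set \<Rightarrow> ('c \<Rightarrow> 'v set) \<Rightarrow> ('c \<Rightarrow> 'v \<Rightarrow> nat) \<Rightarrow> ('v \<Rightarrow> nat) set" where
  "sat_assign V q C vbl forb =
     {x \<in> PiE V (\<lambda>_. {..<q}). \<forall>c\<in>C. \<exists>v\<in>vbl c. x v \<noteq> forb c v}"

definition nu_cond ::
  "'v set \<Rightarrow> nat \<Rightarrow> 'c set \<Rightarrow> ('c \<Rightarrow> 'v set) \<Rightarrow> ('c \<Rightarrow> 'v \<Rightarrow> nat) \<Rightarrow> ('v \<Rightarrow> nat \<Rightarrow> 'y)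
    \<Rightarrow> 'v \<Rightarrow> ('v \<Rightarrow> 'y) \<Rightarrow> 'y \<Rightarrow> real" where
  "nu_cond V q C vbl forb h v \<sigma> y =
     (let A = {x \<in> sat_assign V q C vbl forb. \<forall>u\<in>V - {v}. h u (x u) = \<sigma> u}
      in real (card {x \<in> A. h v (x v) = y}) / real (card A))"

definition dTV_cond ::
  "'v set \<Rightarrow> nat \<Rightarrow> 'c set \<Rightarrow> ('c \<Rightarrow> 'v set) \<Rightarrow> ('c \<Rightarrow> 'v \<Rightarrow> nat) \<Rightarrow> ('v \<Rightarrow> nat \<Rightarrow> 'y)
    \<Rightarrow> ('v \<Rightarrow> 'y set) \<Rightarrow> 'v \<Rightarrow> ('v \<Rightarrow> 'y) \<Rightarrow> ('v \<Rightarrow> 'y) \<Rightarrow> real" where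
  "dTV_cond V q C vbl forb h \<Sigma> v \<sigma> \<tau> =
     (1/2) * (\<Sum>y\<in>\<Sigma> v. \<bar>nu_cond V q C vbl forb h v \<sigma> y - nu_cond V q C vbl forb h v \<tau> y\<bar>)"

end

(*
  Fix v \<noteq> v0 and couple the two conditional distributions at v independently: a pair
  z = (x, y) consists of a solution x whose projection agrees with X off v and a solution y
  whose projection agrees with Y off v. Call a constraint risky for z if each of its
  variables takes the forbidden value in x or in y, and let the component of z be v0 together
  with the variables reachable from v0 through chains of risky constraints. Exchanging x and y
  outside the component maps pairs to pairs, because the projection fibres of X and Y agree
  away from v0 and a risky constraint meeting the component lies inside it. Hence the total
  variation distance at v is at most the probability that v lies in the component.

  The pairs are the product assignments avoiding 2|C| bad events, each of probability at most
  1 / (3000 q^2 d^6 k^6) by the entropy criterion. A lopsided local lemma bounds the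
  probability of an event on the variables of n constraints by 2^n times its unconditioned
  probability; applied to every other constraint of a shortest chain from v to v0 this gives
  (2 rho)^ceil(n/2) with rho = 1 / (18 (kd)^2), and the at most d (kd)^(n-1) chains of length n
  sum to at most 1/2 over all v.
*)

theory Submission
  imports Defs
begin

section \<open>Independence in product spaces\<close>

definition depends_only_on :: "('w \<Rightarrow> 'a) set \<Rightarrow> 'w set \<Rightarrow> ('w \<Rightarrow> 'a) set \<Rightarrow> bool" where
  "depends_only_on P I E \<longleftrightarrow> (\<forall>z\<in>P. \<forall>z'\<in>P. (\<forall>w\<in>I. z w = z' w) \<longrightarrow> (z \<in> E \<longleftrightarrow> z' \<in> E))"

lemma depends_only_on_self: "depends_only_on P I P"
  unfolding depends_only_on_def by blast

lemma inj_on_restrict_pair: "inj_on (\<lambda>z. (restrict z I, restrict z (W - I))) (PiE W D)"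
proof (rule inj_onI)
  fix z z' assume z: "z \<in> PiE W D" and z': "z' \<in> PiE W D"
    and eq: "(restrict z I, restrict z (W - I)) = (restrict z' I, restrict z' (W - I))"
  show "z = z'"
  proof (rule PiE_ext[OF z z'])
    fix w assume "w \<in> W"
    then show "z w = z' w"
      using eq by (cases "w \<in> I") (auto simp: fun_eq_iff restrict_def split: if_splits)
  qed
qed

lemma image_restrict_pair_Int:
  assumes I: "I \<subseteq> W" and E: "E \<subseteq> PiE W D" and F: "F \<subseteq> PiE W D"
    and dE: "depends_only_on (PiE W D) I E" and dF: "depends_only_on (PiE W D) (W - I) F"
  shows "(\<lambda>z. (restrict z I, restrict z (W - I))) ` (E \<inter> F)
           = (\<lambda>z. restrict z I) ` E \<times> (\<lambda>z. restrict z (W - I)) ` F"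
proof
  show "(\<lambda>z. (restrict z I, restrict z (W - I))) ` (E \<inter> F)
          \<subseteq> (\<lambda>z. restrict z I) ` E \<times> (\<lambda>z. restrict z (W - I)) ` F"
    by auto
next
  show "(\<lambda>z. restrict z I) ` E \<times> (\<lambda>z. restrict z (W - I)) ` F
          \<subseteq> (\<lambda>z. (restrict z I, restrict z (W - I))) ` (E \<inter> F)"
  proof clarify
    fix e f assume e: "e \<in> E" and f: "f \<in> F"
    define z where "z = (\<lambda>w. if w \<in> I then e w else f w)"
    have eP: "e \<in> PiE W D" and fP: "f \<in> PiE W D" using e f E F by auto
    have zP: "z \<in> PiE W D"
    proof (rule PiE_I)
      show "z w \<in> D w" if "w \<in> W" for w
        using PiE_mem[OF eP that] PiE_mem[OF fP that] unfolding z_def by simp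
      show "z w = undefined" if "w \<notin> W" for w
        using that I PiE_arb[OF eP that] PiE_arb[OF fP that] unfolding z_def by auto
    qed
    have "\<forall>w\<in>I. z w = e w" "\<forall>w\<in>W - I. z w = f w" by (simp_all add: z_def)
    then have "z \<in> E" "z \<in> F"
      using dE dF zP eP fP e f unfolding depends_only_on_def by blast+
    moreover have "restrict z I = restrict e I" "restrict z (W - I) = restrict f (W - I)"
      by (simp_all add: z_def restrict_def fun_eq_iff)
    ultimately show "(restrict e I, restrict f (W - I))
        \<in> (\<lambda>z. (restrict z I, restrict z (W - I))) ` (E \<inter> F)"
      by (intro image_eqI[where x = z]) simp_all
  qed
qed

lemma card_Int_eq_card_restrict_images:
  assumes "I \<subseteq> W" "E \<subseteq> PiE W D" "F \<subseteq> PiE W D"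
    and "depends_only_on (PiE W D) I E" "depends_only_on (PiE W D) (W - I) F"
  shows "card (E \<inter> F) = card ((\<lambda>z. restrict z I) ` E) * card ((\<lambda>z. restrict z (W - I)) ` F)"
proof -
  have "inj_on (\<lambda>z. (restrict z I, restrict z (W - I))) (E \<inter> F)"
    by (rule inj_on_subset[OF inj_on_restrict_pair]) (use assms(2) in blast)
  then have "card (E \<inter> F) = card ((\<lambda>z. (restrict z I, restrict z (W - I))) ` (E \<inter> F))"
    by (simp add: card_image)
  then show ?thesis
    by (simp add: image_restrict_pair_Int[OF assms] card_cartesian_product)
qed

lemma card_Int_independent:
  assumes "I \<subseteq> W" and E: "E \<subseteq> PiE W D" and F: "F \<subseteq> PiE W D"
    and dE: "depends_only_on (PiE W D) I E" and dF: "depends_only_on (PiE W D) (W - I) F"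
  shows "card (E \<inter> F) * card (PiE W D) = card E * card F"
proof -
  let ?P = "PiE W D" and ?r1 = "\<lambda>E. card ((\<lambda>z. restrict z I) ` E)"
    and ?r2 = "\<lambda>F. card ((\<lambda>z. restrict z (W - I)) ` F)"
  note c = card_Int_eq_card_restrict_images[OF \<open>I \<subseteq> W\<close>]
  have cEF: "card (E \<inter> F) = ?r1 E * ?r2 F" by (rule c[OF E F dE dF])
  have cE: "card E = ?r1 E * ?r2 ?P"
    using c[OF E order_refl dE depends_only_on_self] E by (simp only: Int_absorb2)
  have cF: "card F = ?r1 ?P * ?r2 F"
    using c[OF order_refl F depends_only_on_self dF] F by (simp only: Int_absorb1)
  have cP: "card ?P = ?r1 ?P * ?r2 ?P"
    using c[OF order_refl order_refl depends_only_on_self depends_only_on_self] by (simp only: Int_absorb)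
  have "(a * b) * (c * d) = (a * d) * (c * b)" for a b c d :: nat
    by (simp only: mult_ac)
  then show ?thesis unfolding cEF cE cF cP .
qed

lemma card_PiE_le_prod_ratio:
  fixes B D :: "'w \<Rightarrow> 'a set" and r :: "'w \<Rightarrow> real"
  assumes "finite W" "J \<subseteq> W"
    and "\<And>u. u \<in> W - J \<Longrightarrow> B u = D u"
    and "\<And>u. u \<in> J \<Longrightarrow> real (card (B u)) \<le> r u * card (D u)"
    and "\<And>u. u \<in> J \<Longrightarrow> 0 \<le> r u"
  shows "real (card (PiE W B)) \<le> (\<Prod>u\<in>J. r u) * card (PiE W D)"
proof -
  have "real (card (PiE W B)) = (\<Prod>u\<in>W. real (card (B u)))"
    using assms(1) by (simp add: card_PiE)
  also have "\<dots> \<le> (\<Prod>u\<in>W. (if u \<in> J then r u else 1) * real (card (D u)))"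
    by (intro prod_mono) (use assms(3-5) in auto)
  also have "\<dots> = (\<Prod>u\<in>W. (if u \<in> J then r u else 1)) * (\<Prod>u\<in>W. real (card (D u)))"
    by (rule prod.distrib)
  also have "(\<Prod>u\<in>W. (if u \<in> J then r u else 1)) = (\<Prod>u\<in>J. r u)"
    using assms(1,2) by (simp add: prod.If_cases Int_absorb1)
  also have "(\<Prod>u\<in>W. real (card (D u))) = card (PiE W D)"
    using assms(1) by (simp add: card_PiE)
  finally show ?thesis .
qed

lemma card_PiE_filter_le:
  fixes r :: "'w \<Rightarrow> real"
  assumes "finite W" "J \<subseteq> W"
    and "\<And>u. u \<in> J \<Longrightarrow> real (card {a \<in> D u. P u a}) \<le> r u * card (D u)"
    and "\<And>u. u \<in> J \<Longrightarrow> 0 \<le> r u"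
  shows "real (card {z \<in> PiE W D. \<forall>u\<in>J. P u (z u)}) \<le> (\<Prod>u\<in>J. r u) * card (PiE W D)"
proof -
  have "{z \<in> PiE W D. \<forall>u\<in>J. P u (z u)} = PiE W (\<lambda>u. if u \<in> J then {a \<in> D u. P u a} else D u)"
    using assms(2) by (auto simp: PiE_iff extensional_def split: if_splits)
  then show ?thesis
    using card_PiE_le_prod_ratio[OF assms(1,2), of "\<lambda>u. if u \<in> J then {a \<in> D u. P u a} else D u" D r]
      assms(3,4) by simp
qed

section \<open>Avoiding bad events\<close>

locale bad_events =
  fixes W :: "'w set" and D :: "'w \<Rightarrow> 'a set" and T :: "'t set" and vb :: "'t \<Rightarrow> 'w set"
    and A :: "'t \<Rightarrow> ('w \<Rightarrow> 'a) set" and p :: real and Dg :: nat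
  assumes finite_W: "finite W" and finite_D: "\<And>w. finite (D w)" and finite_T: "finite T"
    and vb_subset: "\<And>t. t \<in> T \<Longrightarrow> vb t \<subseteq> W"
    and A_subset: "\<And>t. t \<in> T \<Longrightarrow> A t \<subseteq> PiE W D"
    and A_depends: "\<And>t. t \<in> T \<Longrightarrow> depends_only_on (PiE W D) (vb t) (A t)"
    and card_A_le: "\<And>t. t \<in> T \<Longrightarrow> real (card (A t)) \<le> p * card (PiE W D)"
    and p_nonneg: "0 \<le> p" and p_le_half: "p \<le> 1/2"
    and card_neighbours_le: "\<And>t. t \<in> T \<Longrightarrow> card {s\<in>T. s \<noteq> t \<and> vb s \<inter> vb t \<noteq> {}} \<le> Dg"
    and half_le_power: "1/2 \<le> (1 - 2*p)^Dg"
begin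

definition avoiding :: "'t set \<Rightarrow> ('w \<Rightarrow> 'a) set" where
  "avoiding S = {z \<in> PiE W D. \<forall>t\<in>S. z \<notin> A t}"

lemma finite_PiE_W: "finite (PiE W D)"
  using finite_W finite_D by (simp add: finite_PiE)

lemma avoiding_subset: "avoiding S \<subseteq> PiE W D"
  unfolding avoiding_def by auto

lemma finite_avoiding: "finite (avoiding S)"
  using finite_PiE_W avoiding_subset by (rule finite_subset[rotated])

lemma avoiding_antimono: "S \<subseteq> S' \<Longrightarrow> avoiding S' \<subseteq> avoiding S"
  unfolding avoiding_def by auto

lemma avoiding_empty: "avoiding {} = PiE W D"
  unfolding avoiding_def by auto

lemma depends_only_on_avoiding:
  assumes "S \<subseteq> T" and "\<And>s. s \<in> S \<Longrightarrow> vb s \<inter> I = {}"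
  shows "depends_only_on (PiE W D) (W - I) (avoiding S)"
  unfolding depends_only_on_def
proof (intro ballI impI)
  fix z z' assume z: "z \<in> PiE W D" and z': "z' \<in> PiE W D" and agree: "\<forall>w\<in>W - I. z w = z' w"
  have "z \<in> A s \<longleftrightarrow> z' \<in> A s" if s: "s \<in> S" for s
  proof -
    have "\<forall>w\<in>vb s. z w = z' w" using agree assms s vb_subset[of s] by blast
    then show ?thesis using A_depends[of s] s assms(1) z z' unfolding depends_only_on_def by blast
  qed
  then show "z \<in> avoiding S \<longleftrightarrow> z' \<in> avoiding S" unfolding avoiding_def using z z' by auto
qed

lemma card_Int_avoiding_independent:
  assumes "E \<subseteq> PiE W D" "depends_only_on (PiE W D) I E" "I \<subseteq> W" "S \<subseteq> T"
    and "\<And>s. s \<in> S \<Longrightarrow> vb s \<inter> I = {}"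
  shows "card (E \<inter> avoiding S) * card (PiE W D) = card E * card (avoiding S)"
  using assms(3,1) avoiding_subset assms(2) depends_only_on_avoiding[OF assms(4,5)]
  by (rule card_Int_independent)

lemma card_avoiding_insert_ge:
  assumes "real (card (A s \<inter> avoiding S)) \<le> 2*p * card (avoiding S)"
  shows "(1 - 2*p) * card (avoiding S) \<le> card (avoiding (insert s S))"
proof -
  have "avoiding (insert s S) = avoiding S - (A s \<inter> avoiding S)"
    unfolding avoiding_def by auto
  then have "card (avoiding (insert s S)) = card (avoiding S) - card (A s \<inter> avoiding S)"
    using finite_avoiding by (simp add: card_Diff_subset)
  moreover have "card (A s \<inter> avoiding S) \<le> card (avoiding S)"
    using finite_avoiding by (simp add: card_mono)
  ultimately show ?thesis using assms by (simp add: of_nat_diff algebra_simps)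
qed

lemma card_avoiding_Un_ge_if:
  assumes "finite R" "S \<inter> R = {}"
    and cond: "\<And>S' s. S \<subseteq> S' \<Longrightarrow> S' \<subseteq> S \<union> R \<Longrightarrow> s \<in> R - S' \<Longrightarrow>
      real (card (A s \<inter> avoiding S')) \<le> 2*p * card (avoiding S')"
  shows "(1 - 2*p)^card R * card (avoiding S) \<le> card (avoiding (S \<union> R))"
  using assms
proof (induction R rule: finite_induct)
  case empty
  then show ?case by simp
next
  case (insert s R)
  have IH: "(1 - 2*p)^card R * card (avoiding S) \<le> card (avoiding (S \<union> R))"
    using insert.IH insert.prems by blast
  have "(1 - 2*p)^card (insert s R) * card (avoiding S)
      = (1 - 2*p) * ((1 - 2*p)^card R * card (avoiding S))"
    using insert.hyps by simp
  also have "\<dots> \<le> (1 - 2*p) * card (avoiding (S \<union> R))"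
    using IH p_le_half by (intro mult_left_mono) auto
  also have "\<dots> \<le> card (avoiding (insert s (S \<union> R)))"
    by (rule card_avoiding_insert_ge, rule insert.prems(2)) (use insert in auto)
  finally show ?case by simp
qed

lemma card_bad_Int_avoiding_disjoint_le:
  assumes t: "t \<in> T" and "S \<subseteq> T" and "\<And>s. s \<in> S \<Longrightarrow> vb s \<inter> vb t = {}"
  shows "real (card (A t \<inter> avoiding S)) \<le> p * card (avoiding S)"
proof (cases "card (PiE W D) = 0")
  case True
  then show ?thesis using avoiding_subset[of S] finite_PiE_W by simp
next
  case False
  have "card (A t \<inter> avoiding S) * card (PiE W D) = card (A t) * card (avoiding S)"
    by (rule card_Int_avoiding_independent) (use A_subset[OF t] A_depends[OF t] vb_subset[OF t] assms in blast)+
  then have "real (card (A t \<inter> avoiding S)) * card (PiE W D) = real (card (A t)) * card (avoiding S)"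
    by (metis of_nat_mult)
  also have "\<dots> \<le> p * card (PiE W D) * card (avoiding S)"
    using card_A_le[OF t] by (intro mult_right_mono) auto
  finally show ?thesis using False by (simp add: algebra_simps)
qed

text \<open>The conditional bound is proved by induction on |S|: the events of S that share no
  variable with t are independent of A t, and conditioning on the at most Dg others
  costs at most a factor (1 - 2p)^Dg \<ge> 1/2.\<close>

lemma card_bad_Int_avoiding_le:
  "S \<subseteq> T \<Longrightarrow> t \<in> T \<Longrightarrow> t \<notin> S \<Longrightarrow> real (card (A t \<inter> avoiding S)) \<le> 2*p * card (avoiding S)"
proof (induction "card S" arbitrary: S t rule: less_induct)
  case less
  note S = less.prems(1) and t = less.prems(2) and tS = less.prems(3)
  have finS: "finite S" using S finite_T finite_subset by blast
  define S1 where "S1 = {s\<in>S. vb s \<inter> vb t \<noteq> {}}"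
  define S2 where "S2 = S - S1"
  have finS1: "finite S1" using finS S1_def by auto
  have "S1 \<subseteq> {s\<in>T. s \<noteq> t \<and> vb s \<inter> vb t \<noteq> {}}" using S tS S1_def by auto
  then have "card S1 \<le> card {s\<in>T. s \<noteq> t \<and> vb s \<inter> vb t \<noteq> {}}"
    using finite_T by (intro card_mono) auto
  then have "card S1 \<le> Dg" using card_neighbours_le[OF t] by linarith
  then have "1/2 \<le> (1 - 2*p)^card S1"
    using half_le_power p_nonneg p_le_half power_decreasing[of "card S1" Dg "1 - 2*p"] by auto
  then have "1/2 * card (avoiding S2) \<le> (1 - 2*p)^card S1 * card (avoiding S2)"
    by (intro mult_right_mono) auto
  also have "\<dots> \<le> card (avoiding (S2 \<union> S1))"
  proof (rule card_avoiding_Un_ge_if[OF finS1])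
    fix S' s assume "S2 \<subseteq> S'" "S' \<subseteq> S2 \<union> S1" and s: "s \<in> S1 - S'"
    then have "S' \<subset> S" "s \<in> S" by (auto simp: S1_def S2_def)
    then show "real (card (A s \<inter> avoiding S')) \<le> 2*p * card (avoiding S')"
      using less.hyps[of S' s] S s psubset_card_mono[OF finS] by auto
  qed (auto simp: S2_def)
  also have "S2 \<union> S1 = S" by (auto simp: S2_def S1_def)
  finally have half: "real (card (avoiding S2)) \<le> 2 * card (avoiding S)" by simp
  have indep: "real (card (A t \<inter> avoiding S2)) \<le> p * card (avoiding S2)"
    by (rule card_bad_Int_avoiding_disjoint_le[OF t]) (use S in \<open>auto simp: S2_def S1_def\<close>)
  have "card (A t \<inter> avoiding S) \<le> card (A t \<inter> avoiding S2)"
    using avoiding_antimono[of S2 S] finite_avoiding by (intro card_mono) (auto simp: S2_def)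
  then have "real (card (A t \<inter> avoiding S)) \<le> p * card (avoiding S2)"
    using indep by linarith
  also have "\<dots> \<le> p * (2 * card (avoiding S))"
    using half p_nonneg by (rule mult_left_mono)
  finally show ?case by simp
qed

lemma card_avoiding_Un_ge:
  assumes "S \<subseteq> T" "R \<subseteq> T" "S \<inter> R = {}"
  shows "(1 - 2*p)^card R * card (avoiding S) \<le> card (avoiding (S \<union> R))"
proof (rule card_avoiding_Un_ge_if)
  show "finite R" using assms(2) finite_T by (rule finite_subset)
  fix S' s assume "S \<subseteq> S'" "S' \<subseteq> S \<union> R" "s \<in> R - S'"
  then show "real (card (A s \<inter> avoiding S')) \<le> 2*p * card (avoiding S')"
    using assms card_bad_Int_avoiding_le[of S' s] by blast
qed (rule assms(3))

lemma card_avoiding_all_ge: "(1 - 2*p)^card T * card (PiE W D) \<le> card (avoiding T)"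
  using card_avoiding_Un_ge[of "{}" T] by (simp add: avoiding_empty)

lemma card_Int_avoiding_le:
  assumes E: "E \<subseteq> PiE W D" and dE: "depends_only_on (PiE W D) I E" and I: "I \<subseteq> W"
  shows "real (card (E \<inter> avoiding T)) * card (PiE W D) * (1 - 2*p)^card {t\<in>T. vb t \<inter> I \<noteq> {}}
          \<le> real (card E) * card (avoiding T)"
proof -
  define T1 where "T1 = {t\<in>T. vb t \<inter> I \<noteq> {}}"
  define T2 where "T2 = T - T1"
  have indep: "card (E \<inter> avoiding T2) * card (PiE W D) = card E * card (avoiding T2)"
    by (rule card_Int_avoiding_independent[OF E dE I]) (auto simp: T2_def T1_def)
  have grow: "(1 - 2*p)^card T1 * card (avoiding T2) \<le> card (avoiding T)"
  proof -
    have "T2 \<union> T1 = T" "T2 \<inter> T1 = {}" "T2 \<subseteq> T" "T1 \<subseteq> T" by (auto simp: T1_def T2_def)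
    then show ?thesis using card_avoiding_Un_ge[of T2 T1] by simp
  qed
  have "card (E \<inter> avoiding T) \<le> card (E \<inter> avoiding T2)"
    using avoiding_antimono[of T2 T] finite_avoiding by (intro card_mono) (auto simp: T2_def)
  then have "real (card (E \<inter> avoiding T)) * card (PiE W D) * (1 - 2*p)^card T1
        \<le> real (card (E \<inter> avoiding T2)) * card (PiE W D) * (1 - 2*p)^card T1"
    using p_le_half by (intro mult_right_mono) auto
  also have "\<dots> = real (card E) * (card (avoiding T2) * (1 - 2*p)^card T1)"
    using indep by (metis mult.assoc of_nat_mult)
  also have "\<dots> \<le> real (card E) * card (avoiding T)"
    using grow by (intro mult_left_mono) (auto simp: algebra_simps)
  finally show ?thesis unfolding T1_def .
qed

end

section \<open>Chains of constraints\<close>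

definition chains_to :: "('c \<Rightarrow> 'v set) \<Rightarrow> 'c set \<Rightarrow> 'v \<Rightarrow> 'c list set" where
  "chains_to vb C v0 = {rs. rs \<noteq> [] \<and> set rs \<subseteq> C \<and> v0 \<in> vb (last rs)
     \<and> successively (\<lambda>c c'. vb c \<inter> vb c' \<noteq> {}) rs}"

definition separated :: "('c \<Rightarrow> 'v set) \<Rightarrow> 'c list \<Rightarrow> bool" where
  "separated vb rs \<longleftrightarrow> (\<forall>i j. i < j \<longrightarrow> j < length rs \<longrightarrow>
      rs!i \<noteq> rs!j \<and> (Suc i < j \<longrightarrow> vb (rs!i) \<inter> vb (rs!j) = {}))"

lemma successively_take: "successively P xs \<Longrightarrow> successively P (take n xs)"
  by (metis append_take_drop_id successively_append_iff)

lemma successively_drop: "successively P xs \<Longrightarrow> successively P (drop n xs)"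
  by (metis append_take_drop_id successively_append_iff)

lemma splice_chain:
  assumes rs: "rs \<in> chains_to vb C v0" and ab: "a \<le> b" and b: "b < length rs"
    and link: "0 < a \<Longrightarrow> vb (rs!(a-1)) \<inter> vb (rs!b) \<noteq> {}"
    and head: "a = 0 \<Longrightarrow> rs!b = rs!0"
  shows "take a rs @ drop b rs \<in> chains_to vb C v0"
    and "hd (take a rs @ drop b rs) = hd rs"
    and "set (take a rs @ drop b rs) \<subseteq> set rs"
proof -
  have ne: "drop b rs \<noteq> []" and rs_ne: "rs \<noteq> []" using b by auto
  have succ: "successively (\<lambda>c c'. vb c \<inter> vb c' \<noteq> {}) rs" using rs unfolding chains_to_def by auto
  have "successively (\<lambda>c c'. vb c \<inter> vb c' \<noteq> {}) (take a rs @ drop b rs)"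
    unfolding successively_append_iff
  proof (intro conjI successively_take successively_drop succ)
    have "a = 0 \<or> (last (take a rs) = rs!(a-1) \<and> hd (drop b rs) = rs!b)"
      using ab b rs_ne by (cases "a = 0") (simp_all add: last_conv_nth hd_drop_conv_nth min_def)
    then show "take a rs = [] \<or> drop b rs = [] \<or> vb (last (take a rs)) \<inter> vb (hd (drop b rs)) \<noteq> {}"
      using link by auto
  qed
  moreover have "last (take a rs @ drop b rs) = last rs" using ne b by (simp add: last_drop)
  moreover show st: "set (take a rs @ drop b rs) \<subseteq> set rs"
    using set_take_subset set_drop_subset by fastforce
  ultimately show "take a rs @ drop b rs \<in> chains_to vb C v0"
    using rs ne unfolding chains_to_def by auto
  show "hd (take a rs @ drop b rs) = hd rs"
    using ab b head rs_ne by (cases "a = 0") (simp_all add: hd_append hd_drop_conv_nth hd_conv_nth)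
qed

text \<open>A shortest chain is separated: a repetition or a shortcut between non-consecutive
  entries could be spliced out.\<close>

lemma exists_separated_chain:
  assumes "rs \<in> chains_to vb C v0" "v \<in> vb (hd rs)"
  shows "\<exists>rs'. rs' \<in> chains_to vb C v0 \<and> set rs' \<subseteq> set rs \<and> v \<in> vb (hd rs') \<and> separated vb rs'"
proof -
  define P where "P = (\<lambda>r. r \<in> chains_to vb C v0 \<and> set r \<subseteq> set rs \<and> v \<in> vb (hd r))"
  have "P rs" using assms P_def by auto
  then obtain r where r: "P r" and min: "\<And>r'. P r' \<Longrightarrow> length r \<le> length r'"
    using ex_has_least_nat[of P rs length] by blast
  have rc: "r \<in> chains_to vb C v0" using r P_def by auto
  have spliced: "P (take a r @ drop b r)"
    if "a \<le> b" "b < length r" "0 < a \<Longrightarrow> vb (r!(a-1)) \<inter> vb (r!b) \<noteq> {}"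
      "a = 0 \<Longrightarrow> r!b = r!0" for a b
    using splice_chain[OF rc that] r unfolding P_def by auto
  have shorter: "\<not> P (take a r @ drop b r)" if "a < b" "b < length r" for a b
    using min[of "take a r @ drop b r"] that by auto
  have "separated vb r" unfolding separated_def
  proof (intro allI impI conjI)
    fix i j assume ij: "i < j" and j: "j < length r"
    show "r ! i \<noteq> r ! j"
    proof
      assume eq: "r ! i = r ! j"
      have link: "0 < i \<Longrightarrow> vb (r!(i-1)) \<inter> vb (r!j) \<noteq> {}"
        using successively_nth[of _ r "i-1"] rc eq ij j unfolding chains_to_def by auto
      have head: "i = 0 \<Longrightarrow> r!j = r!0" using eq by simp
      show False using spliced[OF _ j link head] shorter[OF ij j] ij by simp
    qed
  next
    fix i j assume j: "j < length r" and sij: "Suc i < j"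
    show "vb (r ! i) \<inter> vb (r ! j) = {}"
      using spliced[of "Suc i" j] shorter[OF sij j] sij j by auto
  qed
  then show ?thesis using r P_def by auto
qed

lemma separated_distinct: "separated vb rs \<Longrightarrow> distinct rs"
  unfolding distinct_conv_nth separated_def by (metis linorder_neqE_nat)

lemma card_even_lessThan: "card {i. i < n \<and> even i} = (n + 1) div 2"
proof (induction n)
  case (Suc n)
  have "{i. i < Suc n \<and> even i} = (if even n then insert n else id) {i. i < n \<and> even i}"
    by (auto simp: less_Suc_eq)
  then show ?case using Suc by (cases "even n") (simp_all add: card_insert_if)
qed simp

lemma separated_even_positions:
  assumes sep: "separated vb rs"
  defines "Os \<equiv> (\<lambda>i. rs!i) ` {i. i < length rs \<and> even i}"
  shows "card Os = (length rs + 1) div 2"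
    and "\<And>c c'. c \<in> Os \<Longrightarrow> c' \<in> Os \<Longrightarrow> c \<noteq> c' \<Longrightarrow> vb c \<inter> vb c' = {}"
proof -
  have "inj_on (\<lambda>i. rs!i) {i. i < length rs \<and> even i}"
    using separated_distinct[OF sep] by (auto intro!: inj_onI simp: nth_eq_iff_index_eq)
  then show "card Os = (length rs + 1) div 2"
    unfolding Os_def by (simp add: card_image card_even_lessThan)
next
  have disj: "vb (rs!i) \<inter> vb (rs!j) = {}"
    if "i < j" "j < length rs" "even i" "even j" for i j
  proof -
    have "Suc i < j" using that by (metis Suc_lessI even_Suc)
    then show ?thesis using sep that unfolding separated_def by blast
  qed
  fix c c' assume "c \<in> Os" "c' \<in> Os" "c \<noteq> c'"
  then obtain i j where "c = rs!i" "c' = rs!j" "i < length rs" "j < length rs" "even i" "even j" "i \<noteq> j"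
    unfolding Os_def by auto
  then show "vb c \<inter> vb c' = {}"
    using disj[of i j] disj[of j i] by (metis Int_commute linorder_neqE_nat)
qed

lemma card_meeting_le:
  assumes "finite I" and "\<And>w. w \<in> I \<Longrightarrow> card {c\<in>C. w \<in> vb c} \<le> d"
  shows "card {c\<in>C. vb c \<inter> I \<noteq> {}} \<le> card I * d"
proof -
  have "{c\<in>C. vb c \<inter> I \<noteq> {}} = (\<Union>w\<in>I. {c\<in>C. w \<in> vb c})" by auto
  then have "card {c\<in>C. vb c \<inter> I \<noteq> {}} \<le> (\<Sum>w\<in>I. card {c\<in>C. w \<in> vb c})"
    by (simp add: card_UN_le assms(1))
  also have "\<dots> \<le> (\<Sum>w\<in>I. d)" using assms(2) by (intro sum_mono) auto
  finally show ?thesis by simp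
qed

lemma card_chains_to_length_Suc_le:
  fixes vb :: "'c \<Rightarrow> 'v set"
  assumes finC: "finite C" and deg: "\<And>w. card {c\<in>C. w \<in> vb c} \<le> d"
    and arity: "\<And>c. c \<in> C \<Longrightarrow> card (vb c) \<le> k"
    and fin_vb: "\<And>c. c \<in> C \<Longrightarrow> finite (vb c)"
  shows "card {rs \<in> chains_to vb C v0. length rs = Suc (Suc n)}
           \<le> card {rs \<in> chains_to vb C v0. length rs = Suc n} * (k * d)"
proof -
  define Ch where "Ch = {rs \<in> chains_to vb C v0. length rs = Suc n}"
  define N where "N = (\<lambda>rs. {c\<in>C. vb c \<inter> vb (hd rs) \<noteq> {}})"
  have finCh: "finite Ch"
  proof -
    have "Ch \<subseteq> {rs. set rs \<subseteq> C \<and> length rs = Suc n}" unfolding Ch_def chains_to_def by auto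
    then show ?thesis using finite_lists_length_eq[OF finC] finite_subset by blast
  qed
  have finN: "finite (N rs)" for rs using finC unfolding N_def by auto
  have "{rs \<in> chains_to vb C v0. length rs = Suc (Suc n)} \<subseteq> (\<lambda>(rs, c). c # rs) ` (SIGMA rs:Ch. N rs)"
  proof
    fix rs assume "rs \<in> {rs \<in> chains_to vb C v0. length rs = Suc (Suc n)}"
    then obtain c c' r where rs: "rs = c # c' # r" and ch: "rs \<in> chains_to vb C v0" and l: "length r = n"
      by (auto simp: length_Suc_conv)
    have "c' # r \<in> Ch" "c \<in> N (c' # r)" using ch l unfolding Ch_def N_def chains_to_def rs by auto
    then show "rs \<in> (\<lambda>(rs, c). c # rs) ` (SIGMA rs:Ch. N rs)" using rs by force
  qed
  then have "card {rs \<in> chains_to vb C v0. length rs = Suc (Suc n)} \<le> card ((\<lambda>(rs, c). c # rs) ` (SIGMA rs:Ch. N rs))"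
    using finCh finN by (intro card_mono) auto
  also have "\<dots> \<le> card (SIGMA rs:Ch. N rs)" by (rule card_image_le) (use finCh finN in auto)
  also have "\<dots> = (\<Sum>rs\<in>Ch. card (N rs))" using finCh finN by (simp add: card_SigmaI)
  also have "\<dots> \<le> (\<Sum>rs\<in>Ch. k * d)"
  proof (intro sum_mono)
    fix rs assume "rs \<in> Ch"
    then have hC: "hd rs \<in> C" unfolding Ch_def chains_to_def by (auto intro: hd_in_set)
    have "card (N rs) \<le> card (vb (hd rs)) * d"
      unfolding N_def by (rule card_meeting_le[OF fin_vb[OF hC] deg])
    then show "card (N rs) \<le> k * d" using arity[OF hC] by (meson le_trans mult_le_mono1)
  qed
  finally show ?thesis by (simp add: Ch_def)
qed

lemma card_chains_length_le:
  fixes vb :: "'c \<Rightarrow> 'v set"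
  assumes finC: "finite C" and deg: "\<And>w. card {c\<in>C. w \<in> vb c} \<le> d"
    and arity: "\<And>c. c \<in> C \<Longrightarrow> card (vb c) \<le> k"
    and fin_vb: "\<And>c. c \<in> C \<Longrightarrow> finite (vb c)"
  shows "card {rs \<in> chains_to vb C v0. length rs = Suc n} \<le> d * (k*d)^n"
proof (induction n)
  case 0
  have "{rs \<in> chains_to vb C v0. length rs = Suc 0} \<subseteq> (\<lambda>c. [c]) ` {c\<in>C. v0 \<in> vb c}"
    by (auto simp: chains_to_def length_Suc_conv)
  then have "card {rs \<in> chains_to vb C v0. length rs = Suc 0} \<le> card ((\<lambda>c. [c]) ` {c\<in>C. v0 \<in> vb c})"
    using finC by (intro card_mono) auto
  also have "\<dots> \<le> card {c\<in>C. v0 \<in> vb c}" by (rule card_image_le) (use finC in auto)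
  also have "\<dots> \<le> d" by (rule deg)
  finally show ?case by simp
next
  case (Suc n)
  have "card {rs \<in> chains_to vb C v0. length rs = Suc (Suc n)}
      \<le> card {rs \<in> chains_to vb C v0. length rs = Suc n} * (k * d)"
    by (rule card_chains_to_length_Suc_le[OF assms])
  also have "\<dots> \<le> d * (k*d)^n * (k * d)" using Suc by (rule mult_right_mono) simp
  finally show ?case by (simp add: algebra_simps)
qed

section \<open>Bad events of a pair of projected solutions\<close>

text \<open>The parameter m u stands for the paper's floor(q / s_u), a lower bound on the sizes of
  the projection fibres; the product bound on m is what the entropy criterion provides.\<close>

locale csp_coupling =
  fixes V :: "'v set" and q k d :: nat and C :: "'c set"
    and vbl :: "'c \<Rightarrow> 'v set" and forb :: "'c \<Rightarrow> 'v \<Rightarrow> nat"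
    and h :: "'v \<Rightarrow> nat \<Rightarrow> 'y" and m :: "'v \<Rightarrow> nat" and X Y :: "'v \<Rightarrow> 'y" and v0 :: 'v
  assumes finite_V: "finite V" and finite_C: "finite C"
    and vbl_subset: "\<And>c. c \<in> C \<Longrightarrow> vbl c \<subseteq> V"
    and card_vbl: "\<And>c. c \<in> C \<Longrightarrow> card (vbl c) = k"
    and arity_pos: "\<And>c. c \<in> C \<Longrightarrow> 0 < k"
    and degree: "\<And>v. v \<in> V \<Longrightarrow> card {c \<in> C. v \<in> vbl c} \<le> d"
    and min_fiber_pos: "\<And>u. u \<in> V \<Longrightarrow> 0 < m u"
    and min_fiber_le: "\<And>u \<sigma>. u \<in> V \<Longrightarrow> \<sigma> \<in> {X, Y} \<Longrightarrow> m u \<le> card {a \<in> {..<q}. h u a = \<sigma> u}"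
    and prod_min_fiber_ge: "\<And>c. c \<in> C \<Longrightarrow>
       3000 * real q ^ 2 * real d ^ 6 * real k ^ 6 \<le> (\<Prod>u\<in>vbl c. real (m u))"
    and v0: "v0 \<in> V" and agree: "\<And>u. u \<in> V - {v0} \<Longrightarrow> X u = Y u"
begin

lemma finite_vbl: "c \<in> C \<Longrightarrow> finite (vbl c)"
  using vbl_subset finite_V finite_subset by blast

lemma min_fiber_le_q: "u \<in> V \<Longrightarrow> m u \<le> q"
  using min_fiber_le[of u X] card_mono[of "{..<q}" "{a \<in> {..<q}. h u a = X u}"]
  by (simp add: subset_eq)

lemma vbl_nonempty: "c \<in> C \<Longrightarrow> vbl c \<noteq> {}"
  using card_vbl arity_pos by fastforce

lemma degree_pos: assumes "c \<in> C" shows "0 < d"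
proof -
  obtain w where w: "w \<in> vbl c" using vbl_nonempty[OF assms] by blast
  then have "c \<in> {c' \<in> C. w \<in> vbl c'}" using assms by auto
  then have "0 < card {c' \<in> C. w \<in> vbl c'}" using finite_C by (auto simp: card_gt_0_iff)
  then show ?thesis using degree[of w] w vbl_subset[OF assms] by auto
qed

lemma one_le_kd: "c \<in> C \<Longrightarrow> 1 \<le> real (k * d)"
  using arity_pos degree_pos by (simp only: of_nat_mult) (intro mult_ge1_I; simp add: Suc_le_eq)

text \<open>Each m u is at most q, so the product bound is impossible for q = 1.\<close>

lemma two_le_q: assumes c: "c \<in> C" shows "2 \<le> q"
proof (rule ccontr)
  assume "\<not> 2 \<le> q"
  then have "(\<Prod>u\<in>vbl c. real (m u)) \<le> 1"
    using min_fiber_le_q vbl_subset[OF c] by (intro prod_le_1) force+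
  moreover obtain u where "u \<in> vbl c" using vbl_nonempty[OF c] by blast
  then have "1 \<le> q" using min_fiber_pos min_fiber_le_q vbl_subset[OF c] by force
  then have "1 \<le> real q ^ 2 * real d ^ 6 * real k ^ 6"
    using degree_pos[OF c] arity_pos[OF c] by (intro mult_ge1_I one_le_power) (auto simp: Suc_le_eq)
  ultimately show False using prod_min_fiber_ge[OF c] by linarith
qed

lemma div_prod_min_fiber_le:
  assumes c: "c \<in> C" and "0 \<le> x"
  shows "x / (\<Prod>u\<in>vbl c. real (m u)) \<le> x / (3000 * real q ^ 2 * real d ^ 6 * real k ^ 6)"
proof -
  have "0 < 3000 * real q ^ 2 * real d ^ 6 * real k ^ 6"
    using two_le_q[OF c] degree_pos[OF c] arity_pos[OF c] by simp
  then show ?thesis using prod_min_fiber_ge[OF c] assms(2) by (intro divide_left_mono) auto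
qed

definition allowed :: "('v \<Rightarrow> 'y) \<Rightarrow> 'v \<Rightarrow> 'v \<Rightarrow> nat set" where
  "allowed \<sigma> v u = (if u = v then {..<q} else {a \<in> {..<q}. h u a = \<sigma> u})"

lemma finite_allowed: "finite (allowed \<sigma> v u)"
  unfolding allowed_def by auto

lemma card_allowed_ge: "u \<in> V \<Longrightarrow> \<sigma> \<in> {X, Y} \<Longrightarrow> m u \<le> card (allowed \<sigma> v u)"
  unfolding allowed_def using min_fiber_le min_fiber_le_q by auto

lemma card_allowed_pos: "u \<in> V \<Longrightarrow> \<sigma> \<in> {X, Y} \<Longrightarrow> 0 < card (allowed \<sigma> v u)"
  using card_allowed_ge[of u \<sigma> v] min_fiber_pos[of u] by linarith

lemma allowed_X_eq_Y: "u \<in> V \<Longrightarrow> u \<noteq> v0 \<Longrightarrow> allowed X v u = allowed Y v u"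
  unfolding allowed_def using agree by auto

definition pair_dom :: "'v \<Rightarrow> 'v \<Rightarrow> (nat \<times> nat) set" where
  "pair_dom v u = allowed X v u \<times> allowed Y v u"

lemma finite_pair_dom: "finite (pair_dom v u)"
  unfolding pair_dom_def using finite_allowed by auto

lemma card_PiE_pair_dom_pos: "0 < card (PiE V (pair_dom v))"
  using card_allowed_pos finite_V
  by (simp add: card_PiE pair_dom_def card_cartesian_product prod_pos)

definition side :: "bool \<Rightarrow> nat \<times> nat \<Rightarrow> nat" where
  "side b = (if b then fst else snd)"

definition violated :: "'v \<Rightarrow> 'c \<times> bool \<Rightarrow> ('v \<Rightarrow> nat \<times> nat) set" where
  "violated v t = {z \<in> PiE V (pair_dom v). \<forall>w\<in>vbl (fst t). side (snd t) (z w) = forb (fst t) w}"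

definition p_bad :: real where
  "p_bad = 1 / (3000 * real q ^ 2 * real d ^ 6 * real k ^ 6)"

lemma p_bad_bounds: "0 \<le> p_bad" "p_bad \<le> 1/4" "4 * real (k * d) * p_bad \<le> 1/2"
proof -
  show "0 \<le> p_bad" unfolding p_bad_def by simp
  have "4 * real (k * d) * p_bad \<le> 1/2 \<and> p_bad \<le> 1/4"
  proof (cases "q = 0 \<or> d = 0 \<or> k = 0")
    case True
    then show ?thesis unfolding p_bad_def by auto
  next
    case False
    then have "1 \<le> real q" "1 \<le> real d" "1 \<le> real k" by auto
    then have "1 \<le> real q ^ 2 * real d ^ 6 * real k ^ 6"
      by (intro mult_ge1_I one_le_power)
    moreover have "real k * real d \<le> real q ^ 2 * (real d ^ 6 * real k ^ 6)"
    proof -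
      have "real d \<le> real d ^ 6" "real k \<le> real k ^ 6"
        using \<open>1 \<le> real d\<close> \<open>1 \<le> real k\<close> by (simp_all add: power_increasing[of 1 6, simplified])
      then have "real k * real d \<le> real d ^ 6 * real k ^ 6"
        by (simp add: mult.commute mult_mono)
      also have "\<dots> \<le> real q ^ 2 * (real d ^ 6 * real k ^ 6)"
        using mult_right_mono[OF one_le_power[OF \<open>1 \<le> real q\<close>, of 2], of "real d ^ 6 * real k ^ 6"]
        by simp
      finally show ?thesis .
    qed
    ultimately show ?thesis unfolding p_bad_def by (simp add: field_simps)
  qed
  then show "p_bad \<le> 1/4" "4 * real (k * d) * p_bad \<le> 1/2" by auto
qed

lemma card_side_eq_le:
  assumes "u \<in> V"
  shows "real (card {p \<in> pair_dom v u. side b p = f}) \<le> (1 / m u) * card (pair_dom v u)"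
proof -
  let ?S = "{p \<in> pair_dom v u. side b p = f}"
  let ?A = "allowed (if b then X else Y) v u" and ?B = "allowed (if b then Y else X) v u"
  let ?emb = "if b then Pair f else (\<lambda>a. (a, f))"
  have "card ?S \<le> card (?emb ` ?B)"
    by (rule card_mono) (auto simp: finite_allowed pair_dom_def side_def)
  also have "\<dots> \<le> card ?B" by (rule card_image_le[OF finite_allowed])
  finally have "card ?S * m u \<le> card ?B * card ?A"
    using card_allowed_ge[OF assms] by (intro mult_le_mono) auto
  also have "\<dots> = card (pair_dom v u)"
    unfolding pair_dom_def by (cases b) (simp_all add: card_cartesian_product)
  finally have "real (card ?S) * m u \<le> card (pair_dom v u)"
    using of_nat_mono by fastforce
  then show ?thesis using min_fiber_pos[OF assms] by (simp add: field_simps)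
qed

lemma card_violated_le:
  assumes c: "c \<in> C"
  shows "real (card (violated v (c, b))) \<le> p_bad * card (PiE V (pair_dom v))"
proof -
  have "real (card (violated v (c, b))) \<le> (\<Prod>u\<in>vbl c. 1 / real (m u)) * card (PiE V (pair_dom v))"
    unfolding violated_def fst_conv snd_conv
    by (rule card_PiE_filter_le[OF finite_V vbl_subset[OF c], where P = "\<lambda>u a. side b a = forb c u"])
      (use card_side_eq_le vbl_subset[OF c] in auto)
  also have "(\<Prod>u\<in>vbl c. 1 / real (m u)) = 1 / (\<Prod>u\<in>vbl c. real (m u))"
    by (simp add: prod_dividef)
  also have "\<dots> \<le> p_bad"
    unfolding p_bad_def by (rule div_prod_min_fiber_le[OF c]) simp
  finally show ?thesis by (simp add: mult_right_mono)
qed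

lemma card_events_meeting_le:
  assumes "I \<subseteq> V" "finite I"
  shows "card {t \<in> C \<times> (UNIV :: bool set). vbl (fst t) \<inter> I \<noteq> {}} \<le> 2 * d * card I"
proof -
  have "{t \<in> C \<times> (UNIV :: bool set). vbl (fst t) \<inter> I \<noteq> {}} = {c\<in>C. vbl c \<inter> I \<noteq> {}} \<times> UNIV"
    by auto
  then show ?thesis
    using card_meeting_le[OF assms(2), of C vbl d] degree assms(1)
    by (auto simp: card_cartesian_product mult.commute)
qed

lemma bad_events_violated:
  "bad_events V (pair_dom v) (C \<times> UNIV) (\<lambda>t. vbl (fst t)) (violated v) p_bad (2*k*d)"
proof
  show "finite V" by (rule finite_V)
  show "finite (pair_dom v w)" for w by (rule finite_pair_dom)
  show "finite (C \<times> (UNIV :: bool set))" using finite_C by simp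
  show "vbl (fst t) \<subseteq> V" if "t \<in> C \<times> (UNIV :: bool set)" for t
    using that vbl_subset by force
  show "violated v t \<subseteq> PiE V (pair_dom v)" for t
    unfolding violated_def by auto
  show "depends_only_on (PiE V (pair_dom v)) (vbl (fst t)) (violated v t)" for t
    unfolding depends_only_on_def violated_def by auto
  show "real (card (violated v t)) \<le> p_bad * card (PiE V (pair_dom v))"
    if "t \<in> C \<times> (UNIV :: bool set)" for t
    using that card_violated_le by (cases t) auto
  show "0 \<le> p_bad" "p_bad \<le> 1/2" using p_bad_bounds by auto
  show "card {s \<in> C \<times> UNIV. s \<noteq> t \<and> vbl (fst s) \<inter> vbl (fst t) \<noteq> {}} \<le> 2*k*d"
    if t: "t \<in> C \<times> (UNIV :: bool set)" for t
  proof -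
    have "card {s \<in> C \<times> UNIV. s \<noteq> t \<and> vbl (fst s) \<inter> vbl (fst t) \<noteq> {}}
        \<le> card {s \<in> C \<times> (UNIV :: bool set). vbl (fst s) \<inter> vbl (fst t) \<noteq> {}}"
      using finite_C by (intro card_mono) auto
    also have "\<dots> \<le> 2 * d * card (vbl (fst t))"
      using t vbl_subset finite_vbl by (intro card_events_meeting_le) force+
    finally show ?thesis using card_vbl t by (auto simp: algebra_simps)
  qed
  have "1 + real (2*k*d) * (- 2 * p_bad) \<le> (1 + (- 2 * p_bad))^(2*k*d)"
    by (rule Bernoulli_inequality) (use p_bad_bounds in auto)
  then show "1/2 \<le> (1 - 2 * p_bad)^(2*k*d)" using p_bad_bounds(3) by (simp add: algebra_simps)
qed

end

section \<open>The coupling and the swap involution\<close>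

lemma card_fiber_diff_le_involution:
  fixes G B :: "'z set" and \<tau> :: "'z \<Rightarrow> 'z" and f1 f2 :: "'z \<Rightarrow> 'y"
  assumes finG: "finite G" and BG: "B \<subseteq> G"
    and \<tau>G: "\<And>z. z \<in> G \<Longrightarrow> \<tau> z \<in> G" and \<tau>\<tau>: "\<And>z. z \<in> G \<Longrightarrow> \<tau> (\<tau> z) = z"
    and \<tau>B: "\<And>z. z \<in> G \<Longrightarrow> \<tau> z \<in> B \<longleftrightarrow> z \<in> B"
    and \<tau>f: "\<And>z. z \<in> G - B \<Longrightarrow> f1 (\<tau> z) = f2 z"
  shows "\<bar>real (card {z\<in>G. f1 z = a}) - real (card {z\<in>G. f2 z = a})\<bar>
          \<le> real (card {z\<in>B. f1 z = a}) + real (card {z\<in>B. f2 z = a})"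
proof -
  have \<tau>GB: "\<tau> z \<in> G - B" if "z \<in> G - B" for z using that \<tau>G \<tau>B by auto
  have \<tau>f': "f2 (\<tau> z) = f1 z" if "z \<in> G - B" for z
    using \<tau>f[OF \<tau>GB[OF that]] \<tau>\<tau> that by simp
  have "bij_betw \<tau> {z\<in>G-B. f2 z = a} {z\<in>G-B. f1 z = a}"
  proof (rule bij_betwI[where g = \<tau>])
    show "\<tau> \<in> {z\<in>G-B. f2 z = a} \<rightarrow> {z\<in>G-B. f1 z = a}" using \<tau>GB \<tau>f by auto
    show "\<tau> \<in> {z\<in>G-B. f1 z = a} \<rightarrow> {z\<in>G-B. f2 z = a}" using \<tau>GB \<tau>f' by auto
  qed (use \<tau>\<tau> in auto)
  then have eq: "card {z\<in>G-B. f1 z = a} = card {z\<in>G-B. f2 z = a}"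
    by (simp add: bij_betw_same_card)
  have split: "card {z\<in>G. f z = a} = card {z\<in>B. f z = a} + card {z\<in>G-B. f z = a}" for f :: "'z \<Rightarrow> 'y"
  proof -
    have "{z\<in>G. f z = a} = {z\<in>B. f z = a} \<union> {z\<in>G-B. f z = a}" using BG by auto
    moreover have "finite B" using BG finG by (rule finite_subset)
    ultimately show ?thesis using finG by (simp add: card_Un_disjoint disjoint_iff)
  qed
  show ?thesis using split[of f1] split[of f2] eq by simp
qed

lemma sum_card_fibers_le:
  assumes "finite B"
  shows "(\<Sum>a\<in>S. card {z\<in>B. f z = a}) \<le> card B"
proof (cases "finite S")
  case True
  have "(\<Sum>a\<in>S. card {z\<in>B. f z = a}) = card (\<Union>a\<in>S. {z\<in>B. f z = a})"
    by (rule card_UN_disjoint[symmetric]) (use assms True in auto)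
  also have "\<dots> \<le> card B" by (rule card_mono) (use assms in auto)
  finally show ?thesis .
qed simp

context csp_coupling
begin

definition coupled :: "'v \<Rightarrow> ('v \<Rightarrow> nat \<times> nat) set" where
  "coupled v = {z \<in> PiE V (pair_dom v). \<forall>t\<in>C \<times> UNIV. z \<notin> violated v t}"

lemma coupled_eq_avoiding: "coupled v = bad_events.avoiding V (pair_dom v) (violated v) (C \<times> UNIV)"
  by (simp add: coupled_def bad_events.avoiding_def[OF bad_events_violated])

lemma finite_coupled: "finite (coupled v)"
  using bad_events.finite_avoiding[OF bad_events_violated] coupled_eq_avoiding by simp

lemma card_coupled_pos: "0 < card (coupled v)"
proof -
  have "(1 - 2 * p_bad)^card (C \<times> (UNIV :: bool set)) * card (PiE V (pair_dom v)) \<le> card (coupled v)"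
    using bad_events.card_avoiding_all_ge[OF bad_events_violated] coupled_eq_avoiding by simp
  moreover have "0 < (1 - 2 * p_bad)^card (C \<times> (UNIV :: bool set))"
    using p_bad_bounds by simp
  ultimately show ?thesis using card_PiE_pair_dom_pos[of v]
    by (metis of_nat_0_less_iff order_less_le_trans zero_less_mult_iff)
qed

lemma coupled_iff: "z \<in> coupled v \<longleftrightarrow> z \<in> PiE V (pair_dom v) \<and>
   (\<forall>c\<in>C. (\<exists>w\<in>vbl c. fst (z w) \<noteq> forb c w) \<and> (\<exists>w\<in>vbl c. snd (z w) \<noteq> forb c w))"
  unfolding coupled_def violated_def side_def by (auto simp: all_bool_eq)

definition sols :: "('v \<Rightarrow> 'y) \<Rightarrow> 'v \<Rightarrow> ('v \<Rightarrow> nat) set" where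
  "sols \<sigma> v = {x \<in> sat_assign V q C vbl forb. \<forall>u\<in>V - {v}. h u (x u) = \<sigma> u}"

lemma sols_iff: "x \<in> sols \<sigma> v \<longleftrightarrow> x \<in> PiE V (allowed \<sigma> v) \<and> (\<forall>c\<in>C. \<exists>w\<in>vbl c. x w \<noteq> forb c w)"
  unfolding sols_def sat_assign_def allowed_def by (auto simp: PiE_iff)

lemma nu_cond_eq:
  "nu_cond V q C vbl forb h v \<sigma> a = real (card {x \<in> sols \<sigma> v. h v (x v) = a}) / real (card (sols \<sigma> v))"
  unfolding nu_cond_def sols_def Let_def by (rule refl)

definition pair_up :: "('v \<Rightarrow> nat) \<times> ('v \<Rightarrow> nat) \<Rightarrow> 'v \<Rightarrow> nat \<times> nat" where
  "pair_up xy = (\<lambda>u\<in>V. (fst xy u, snd xy u))"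

lemma inj_on_pair_up: "inj_on pair_up (sols X v \<times> sols Y v)"
proof (rule inj_onI)
  fix a b assume "a \<in> sols X v \<times> sols Y v" "b \<in> sols X v \<times> sols Y v"
    and eq: "pair_up a = pair_up b"
  then have "fst a \<in> PiE V (allowed X v)" "fst b \<in> PiE V (allowed X v)"
    "snd a \<in> PiE V (allowed Y v)" "snd b \<in> PiE V (allowed Y v)" by (auto simp: sols_iff)
  moreover have "fst a u = fst b u \<and> snd a u = snd b u" if "u \<in> V" for u
    using fun_cong[OF eq, of u] that by (simp add: pair_up_def)
  ultimately show "a = b" by (metis PiE_ext prod_eqI)
qed

lemma coupled_eq_image_pair_up: "coupled v = pair_up ` (sols X v \<times> sols Y v)"
proof
  show "pair_up ` (sols X v \<times> sols Y v) \<subseteq> coupled v"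
  proof clarify
    fix x y assume x: "x \<in> sols X v" and y: "y \<in> sols Y v"
    then show "pair_up (x, y) \<in> coupled v"
      using vbl_subset unfolding coupled_iff sols_iff pair_up_def pair_dom_def
      by (fastforce simp: PiE_iff)
  qed
next
  show "coupled v \<subseteq> pair_up ` (sols X v \<times> sols Y v)"
  proof
    fix z assume z: "z \<in> coupled v"
    then have zP: "z \<in> PiE V (pair_dom v)" by (simp add: coupled_iff)
    define x where "x = (\<lambda>u\<in>V. fst (z u))"
    define y where "y = (\<lambda>u\<in>V. snd (z u))"
    have "fst (z u) \<in> allowed X v u \<and> snd (z u) \<in> allowed Y v u" if "u \<in> V" for u
      using PiE_mem[OF zP that] by (simp add: pair_dom_def mem_Times_iff)
    then have "x \<in> PiE V (allowed X v)" "y \<in> PiE V (allowed Y v)"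
      by (auto simp: x_def y_def restrict_PiE_iff)
    moreover have "(\<exists>w\<in>vbl c. x w \<noteq> forb c w) \<and> (\<exists>w\<in>vbl c. y w \<noteq> forb c w)"
      if c: "c \<in> C" for c
    proof -
      obtain w w' where "w \<in> vbl c" "fst (z w) \<noteq> forb c w" "w' \<in> vbl c" "snd (z w') \<noteq> forb c w'"
        using z c unfolding coupled_iff by blast
      then show ?thesis using vbl_subset[OF c] unfolding x_def y_def by auto
    qed
    ultimately have "x \<in> sols X v" "y \<in> sols Y v" by (simp_all add: sols_iff)
    moreover have "pair_up (x, y) = z"
      using zP unfolding pair_up_def x_def y_def by (auto simp: PiE_iff extensional_def)
    ultimately show "z \<in> pair_up ` (sols X v \<times> sols Y v)" by force
  qed
qed

lemma card_coupled_filter: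
  assumes v: "v \<in> V"
  shows "card {z \<in> coupled v. P (fst (z v)) \<and> Q (snd (z v))}
           = card {x \<in> sols X v. P (x v)} * card {y \<in> sols Y v. Q (y v)}"
proof -
  have "{z \<in> coupled v. P (fst (z v)) \<and> Q (snd (z v))}
          = pair_up ` ({x \<in> sols X v. P (x v)} \<times> {y \<in> sols Y v. Q (y v)})"
    unfolding coupled_eq_image_pair_up using v by (auto simp: pair_up_def)
  moreover have "inj_on pair_up ({x \<in> sols X v. P (x v)} \<times> {y \<in> sols Y v. Q (y v)})"
    by (rule inj_on_subset[OF inj_on_pair_up]) auto
  ultimately show ?thesis by (simp add: card_image card_cartesian_product)
qed

lemma nu_cond_eq_coupled:
  assumes v: "v \<in> V"
  shows "nu_cond V q C vbl forb h v X a = real (card {z \<in> coupled v. h v (fst (z v)) = a}) / card (coupled v)"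
    and "nu_cond V q C vbl forb h v Y a = real (card {z \<in> coupled v. h v (snd (z v)) = a}) / card (coupled v)"
proof -
  have cG: "card (coupled v) = card (sols X v) * card (sols Y v)"
    using card_coupled_filter[OF v, of "\<lambda>_. True" "\<lambda>_. True"] by simp
  then have "0 < card (sols X v)" "0 < card (sols Y v)" using card_coupled_pos[of v] by auto
  then show "nu_cond V q C vbl forb h v X a = real (card {z \<in> coupled v. h v (fst (z v)) = a}) / card (coupled v)"
    and "nu_cond V q C vbl forb h v Y a = real (card {z \<in> coupled v. h v (snd (z v)) = a}) / card (coupled v)"
    using card_coupled_filter[OF v, of "\<lambda>x. h v x = a" "\<lambda>_. True"]
      card_coupled_filter[OF v, of "\<lambda>_. True" "\<lambda>y. h v y = a"]
    unfolding nu_cond_eq cG by simp_all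
qed

definition risky :: "('v \<Rightarrow> nat \<times> nat) \<Rightarrow> 'c \<Rightarrow> bool" where
  "risky z c \<longleftrightarrow> (\<forall>w\<in>vbl c. fst (z w) = forb c w \<or> snd (z w) = forb c w)"

definition component :: "('v \<Rightarrow> nat \<times> nat) \<Rightarrow> 'v set" where
  "component z = insert v0 {u. \<exists>rs\<in>chains_to vbl C v0. (\<forall>c\<in>set rs. risky z c) \<and> u \<in> vbl (hd rs)}"

definition swap_outside :: "('v \<Rightarrow> nat \<times> nat) \<Rightarrow> 'v \<Rightarrow> nat \<times> nat" where
  "swap_outside z = (\<lambda>u. if u \<in> V - component z then prod.swap (z u) else z u)"

lemma risky_swap_outside: "risky (swap_outside z) c = risky z c"
  unfolding risky_def swap_outside_def by (auto simp: prod.swap_def)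

lemma component_swap_outside: "component (swap_outside z) = component z"
  unfolding component_def risky_swap_outside ..

lemma swap_outside_swap_outside: "swap_outside (swap_outside z) = z"
  unfolding swap_outside_def component_swap_outside[unfolded swap_outside_def] by auto

lemma fst_swap_outside: "v \<in> V \<Longrightarrow> v \<notin> component z \<Longrightarrow> fst (swap_outside z v) = snd (z v)"
  unfolding swap_outside_def by simp

lemma vbl_subset_component:
  assumes c: "c \<in> C" and "risky z c" and "vbl c \<inter> component z \<noteq> {}"
  shows "vbl c \<subseteq> component z"
proof -
  obtain w where w: "w \<in> vbl c" "w \<in> component z" using assms(3) by auto
  have "\<exists>rs\<in>chains_to vbl C v0. (\<forall>c'\<in>set rs. risky z c') \<and> hd rs = c"
  proof (cases "w = v0")
    case True
    then have "[c] \<in> chains_to vbl C v0" using c w unfolding chains_to_def by auto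
    then show ?thesis using assms(2) by force
  next
    case False
    then obtain rs where rs: "rs \<in> chains_to vbl C v0" "\<forall>c'\<in>set rs. risky z c'" "w \<in> vbl (hd rs)"
      using w unfolding component_def by auto
    then have "c # rs \<in> chains_to vbl C v0"
      using c w unfolding chains_to_def by (cases rs) auto
    then show ?thesis using rs assms(2) by (intro bexI[of _ "c # rs"]) auto
  qed
  then show ?thesis unfolding component_def by auto
qed

lemma swap_outside_PiE:
  assumes zP: "z \<in> PiE V (pair_dom v)"
  shows "swap_outside z \<in> PiE V (pair_dom v)"
proof (rule PiE_I)
  fix u assume u: "u \<in> V"
  show "swap_outside z u \<in> pair_dom v u"
  proof (cases "u \<in> component z")
    case True
    then show ?thesis using PiE_mem[OF zP u] unfolding swap_outside_def by simp
  next
    case False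
    then have "allowed X v u = allowed Y v u" using allowed_X_eq_Y u by (auto simp: component_def)
    then show ?thesis using PiE_mem[OF zP u] u False unfolding swap_outside_def pair_dom_def by auto
  qed
next
  fix u assume "u \<notin> V"
  then show "swap_outside z u = undefined" using PiE_arb[OF zP] unfolding swap_outside_def by simp
qed

lemma swap_outside_coupled:
  assumes z: "z \<in> coupled v"
  shows "swap_outside z \<in> coupled v"
  unfolding coupled_iff
proof
  have zP: "z \<in> PiE V (pair_dom v)"
    and zc: "\<forall>c\<in>C. (\<exists>w\<in>vbl c. fst (z w) \<noteq> forb c w) \<and> (\<exists>w\<in>vbl c. snd (z w) \<noteq> forb c w)"
    using z coupled_iff by auto
  show "swap_outside z \<in> PiE V (pair_dom v)" using zP by (rule swap_outside_PiE)
  show "\<forall>c\<in>C. (\<exists>w\<in>vbl c. fst (swap_outside z w) \<noteq> forb c w) \<and> (\<exists>w\<in>vbl c. snd (swap_outside z w) \<noteq> forb c w)"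
  proof
    fix c assume c: "c \<in> C"
    consider "\<not> risky z c" | "vbl c \<subseteq> component z" | "vbl c \<inter> component z = {}"
      using vbl_subset_component[OF c] by blast
    then show "(\<exists>w\<in>vbl c. fst (swap_outside z w) \<noteq> forb c w) \<and> (\<exists>w\<in>vbl c. snd (swap_outside z w) \<noteq> forb c w)"
    proof cases
      case 1
      then obtain w where w: "w \<in> vbl c" "fst (z w) \<noteq> forb c w" "snd (z w) \<noteq> forb c w"
        unfolding risky_def by auto
      then have "fst (swap_outside z w) \<noteq> forb c w \<and> snd (swap_outside z w) \<noteq> forb c w"
        unfolding swap_outside_def by (cases "z w") auto
      then show ?thesis using w(1) by blast
    next
      case 2
      then have "\<forall>w\<in>vbl c. swap_outside z w = z w" unfolding swap_outside_def by auto
      then show ?thesis using zc c by auto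
    next
      case 3
      then have "\<forall>w\<in>vbl c. swap_outside z w = prod.swap (z w)"
        using vbl_subset[OF c] unfolding swap_outside_def by auto
      then show ?thesis using zc c by auto
    qed
  qed
qed

text \<open>The swap is an involution of the coupled pairs which exchanges the two marginals at v
  on all pairs whose component does not contain v.\<close>

lemma dTV_cond_le_component:
  assumes v: "v \<in> V" and vv0: "v \<noteq> v0"
  shows "dTV_cond V q C vbl forb h \<Sigma> v X Y \<le> real (card {z\<in>coupled v. v \<in> component z}) / card (coupled v)"
proof -
  define G where "G = coupled v"
  define B where "B = {z\<in>coupled v. v \<in> component z}"
  define N where "N = real (card G)"
  have Npos: "0 < N" using card_coupled_pos unfolding N_def G_def by simp
  have finB: "finite B" unfolding B_def using finite_coupled by auto
  have diff: "\<bar>real (card {z\<in>G. h v (fst (z v)) = a}) - real (card {z\<in>G. h v (snd (z v)) = a})\<bar>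
          \<le> real (card {z\<in>B. h v (fst (z v)) = a}) + real (card {z\<in>B. h v (snd (z v)) = a})" for a
    by (rule card_fiber_diff_le_involution[where \<tau> = swap_outside])
      (use finite_coupled swap_outside_coupled swap_outside_swap_outside component_swap_outside
        fst_swap_outside[OF v] in \<open>auto simp: G_def B_def\<close>)
  have "dTV_cond V q C vbl forb h \<Sigma> v X Y
      = 1/2 * (\<Sum>a\<in>\<Sigma> v. \<bar>real (card {z\<in>G. h v (fst (z v)) = a}) - real (card {z\<in>G. h v (snd (z v)) = a})\<bar> / N)"
    unfolding dTV_cond_def nu_cond_eq_coupled[OF v] G_def N_def using Npos
    by (simp add: diff_divide_distrib[symmetric])
  also have "\<dots> \<le> 1/2 * ((real (\<Sum>a\<in>\<Sigma> v. card {z\<in>B. h v (fst (z v)) = a})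
                          + real (\<Sum>a\<in>\<Sigma> v. card {z\<in>B. h v (snd (z v)) = a})) / N)"
    using diff Npos
    by (simp add: sum_divide_distrib[symmetric] sum.distrib[symmetric] divide_right_mono sum_mono)
  also have "\<dots> \<le> 1/2 * ((real (card B) + real (card B)) / N)"
    using sum_card_fibers_le[OF finB] Npos
    by (intro mult_left_mono divide_right_mono add_mono) (auto simp flip: of_nat_sum)
  also have "\<dots> = real (card B) / N" by simp
  finally show ?thesis unfolding B_def N_def G_def .
qed

end

section \<open>Risky chains\<close>

lemma cube_twice_minus_one_le: "1 \<le> (n::nat) \<Longrightarrow> (2*n - 1)^3 \<le> n^5"
proof -
  assume n: "1 \<le> n"
  consider "n = 1" | "n = 2" | "3 \<le> n" using n by linarith
  then show ?thesis
  proof cases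
    case 3
    have "(2*n - 1)^3 \<le> (2*n)^3" by (intro power_mono) auto
    also have "\<dots> = 8 * n^3" by (simp add: power_mult_distrib)
    also have "\<dots> \<le> n^2 * n^3"
      using 3 power_mono[of 3 n 2] by (intro mult_right_mono) auto
    also have "\<dots> = n^5" by (simp flip: power_add)
    finally show ?thesis .
  qed auto
qed

text \<open>At most 2|D| - 1 of the |D|^2 pairs hit a given value, and (2n - 1)^3 \<le> n^5.\<close>

lemma card_pairs_hitting_cube_le:
  assumes fin: "finite D" and pos: "0 < card D"
  shows "(real (card {p \<in> D \<times> D. fst p = f \<or> snd p = f}) / card (D \<times> D))^3 \<le> 1 / card D"
proof -
  define n where "n = card D"
  have "card {p \<in> D \<times> D. fst p = f \<or> snd p = f} \<le> 2*n - 1"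
  proof (cases "f \<in> D")
    case True
    have "card {p \<in> D \<times> D. fst p = f \<or> snd p = f} \<le> card (({f} \<times> D) \<union> ((D - {f}) \<times> {f}))"
      using fin by (intro card_mono) auto
    also have "\<dots> \<le> card ({f} \<times> D) + card ((D - {f}) \<times> {f})" by (rule card_Un_le)
    also have "\<dots> = n + (n - 1)" using True fin unfolding n_def by (simp add: card_cartesian_product)
    finally show ?thesis using pos n_def by linarith
  next
    case False
    then have "{p \<in> D \<times> D. fst p = f \<or> snd p = f} = {}" by auto
    then show ?thesis by (simp only: card.empty zero_le)
  qed
  then have "card {p \<in> D \<times> D. fst p = f \<or> snd p = f} ^ 3 \<le> (2*n - 1)^3"
    by (rule power_mono) simp
  also have "\<dots> \<le> n ^ 5" using pos by (intro cube_twice_minus_one_le) (simp add: n_def)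
  finally have c3: "real (card {p \<in> D \<times> D. fst p = f \<or> snd p = f}) ^ 3 \<le> real n ^ 5"
    by (simp flip: of_nat_power)
  have "real (card (D \<times> D)) ^ 3 = real n ^ 6"
    by (simp add: n_def card_cartesian_product power_mult_distrib flip: power_add)
  then have "(real (card {p \<in> D \<times> D. fst p = f \<or> snd p = f}) / card (D \<times> D))^3
      = real (card {p \<in> D \<times> D. fst p = f \<or> snd p = f}) ^ 3 / real n ^ 6"
    by (simp add: power_divide)
  also have "\<dots> \<le> real n ^ 5 / real n ^ 6" using c3 by (rule divide_right_mono) simp
  also have "\<dots> = 1 / real n" using pos n_def by (simp add: field_simps power_Suc[symmetric] del: power_Suc)
  finally show ?thesis unfolding n_def .
qed

context csp_coupling
begin

text \<open>Chosen so that (kd)^2 * 2 rho = 1/9: a separated chain of length n is risky with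
  probability at most (2 rho)^ceil(n/2), and counted with its starting variable there are at
  most (kd)^n of them, so the chains of length n contribute at most (1/3)^n.\<close>

definition rho :: real where
  "rho = 1 / (18 * real (k*d)^2)"

lemma rho_nonneg: "0 \<le> rho"
  unfolding rho_def by simp

text \<open>This is where the constant 3000 > 18^3 / 2 and the assumption q \<ge> 2 enter.\<close>

lemma q_div_cond_const_le_rho_cube:
  assumes c: "c \<in> C"
  shows "real q / (3000 * real q ^ 2 * real d ^ 6 * real k ^ 6) \<le> rho^3"
proof -
  have q: "2 \<le> real q" using two_le_q[OF c] by simp
  have kd: "1 \<le> real (k*d)" by (rule one_le_kd[OF c])
  have "real q / (3000 * real q ^ 2 * real d ^ 6 * real k ^ 6) = 1 / (3000 * real q * real (k*d)^6)"
    using q by (simp add: field_simps power_mult_distrib power2_eq_square)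
  also have "\<dots> \<le> 1 / (5832 * real (k*d)^6)"
    using q kd arity_pos[OF c] degree_pos[OF c]
    by (intro divide_left_mono mult_right_mono) (auto intro!: mult_pos_pos)
  also have "\<dots> = rho^3" unfolding rho_def by (simp add: power_divide power_mult_distrib flip: power_mult)
  finally show ?thesis .
qed

text \<open>A variable of a risky constraint only has to hit the forbidden value in one of the two
  copies, which roughly doubles its probability; the cube absorbs this factor.\<close>

lemma risky_ratio_cube_le:
  assumes u: "u \<in> V"
  shows "(real (card {p \<in> pair_dom v u. fst p = f \<or> snd p = f}) / card (pair_dom v u))^3
           \<le> (if u = v0 then real q else 1) / m u"
proof (cases "u = v0")
  case True
  have "card {p \<in> pair_dom v u. fst p = f \<or> snd p = f} \<le> card (pair_dom v u)"
    using finite_pair_dom by (intro card_mono) auto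
  then have "real (card {p \<in> pair_dom v u. fst p = f \<or> snd p = f}) \<le> card (pair_dom v u)"
    by simp
  then have "(real (card {p \<in> pair_dom v u. fst p = f \<or> snd p = f}) / card (pair_dom v u))^3 \<le> 1"
    by (intro power_le_one) (auto simp: divide_le_eq_1)
  also have "1 \<le> real q / real (m u)" using min_fiber_le_q[OF u] min_fiber_pos[OF u] by simp
  finally show ?thesis using True by simp
next
  case False
  then have "pair_dom v u = allowed X v u \<times> allowed X v u"
    using allowed_X_eq_Y[OF u] unfolding pair_dom_def by simp
  then have "(real (card {p \<in> pair_dom v u. fst p = f \<or> snd p = f}) / card (pair_dom v u))^3
      \<le> 1 / card (allowed X v u)"
    using card_pairs_hitting_cube_le[OF finite_allowed card_allowed_pos[OF u]] by simp
  also have "\<dots> \<le> 1 / m u"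
    using card_allowed_ge[OF u, of X v] card_allowed_pos[OF u, of X v] min_fiber_pos[OF u]
    by (intro divide_left_mono) auto
  finally show ?thesis using False by simp
qed

lemma card_risky_le:
  assumes c: "c \<in> C"
  shows "real (card {z \<in> PiE V (pair_dom v). risky z c}) \<le> rho * card (PiE V (pair_dom v))"
proof -
  define r where "r u = real (card {p \<in> pair_dom v u. fst p = forb c u \<or> snd p = forb c u}) / card (pair_dom v u)" for u
  have r_nonneg: "0 \<le> r u" for u unfolding r_def by simp
  have "real (card {z \<in> PiE V (pair_dom v). risky z c}) \<le> (\<Prod>u\<in>vbl c. r u) * card (PiE V (pair_dom v))"
    unfolding risky_def
  proof (rule card_PiE_filter_le[OF finite_V vbl_subset[OF c], where P = "\<lambda>u p. fst p = forb c u \<or> snd p = forb c u"])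
    fix u assume "u \<in> vbl c"
    then have "0 < card (pair_dom v u)"
      using card_allowed_pos vbl_subset[OF c] by (auto simp: pair_dom_def card_cartesian_product)
    then show "real (card {p \<in> pair_dom v u. fst p = forb c u \<or> snd p = forb c u}) \<le> r u * card (pair_dom v u)"
      unfolding r_def by simp
  qed (rule r_nonneg)
  also have "(\<Prod>u\<in>vbl c. r u) \<le> rho"
  proof -
    have "(\<Prod>u\<in>vbl c. r u)^3 = (\<Prod>u\<in>vbl c. (r u)^3)" by (simp add: prod_power_distrib)
    also have "\<dots> \<le> (\<Prod>u\<in>vbl c. (if u = v0 then real q else 1) / real (m u))"
    proof (intro prod_mono conjI)
      fix u assume "u \<in> vbl c"
      then show "(r u)^3 \<le> (if u = v0 then real q else 1) / real (m u)"
        using risky_ratio_cube_le[of u v "forb c u"] vbl_subset[OF c] unfolding r_def by blast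
    qed (simp add: r_nonneg)
    also have "\<dots> = (\<Prod>u\<in>vbl c. (if u = v0 then real q else 1)) / (\<Prod>u\<in>vbl c. real (m u))"
      by (simp add: prod_dividef)
    also have "\<dots> \<le> real q / (\<Prod>u\<in>vbl c. real (m u))"
      using finite_vbl[OF c] two_le_q[OF c] by (intro divide_right_mono) (simp_all add: prod.delta prod_nonneg)
    also have "\<dots> \<le> real q / (3000 * real q ^ 2 * real d ^ 6 * real k ^ 6)"
      by (rule div_prod_min_fiber_le[OF c]) simp
    also have "\<dots> \<le> rho^3" by (rule q_div_cond_const_le_rho_cube[OF c])
    finally show ?thesis
      using power_le_imp_le_base[of _ 2 rho] rho_nonneg by (simp add: numeral_3_eq_3)
  qed
  finally show ?thesis
    using card_PiE_pair_dom_pos[of v] by (simp add: mult_right_mono)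
qed

text \<open>Risky events of constraints with disjoint variable sets are independent.\<close>

lemma card_all_risky_le:
  assumes "finite Os" "Os \<subseteq> C"
    and "\<And>c c'. c \<in> Os \<Longrightarrow> c' \<in> Os \<Longrightarrow> c \<noteq> c' \<Longrightarrow> vbl c \<inter> vbl c' = {}"
  shows "real (card {z \<in> PiE V (pair_dom v). \<forall>c\<in>Os. risky z c}) \<le> rho^card Os * card (PiE V (pair_dom v))"
  using assms
proof (induction Os rule: finite_induct)
  case empty
  then show ?case by simp
next
  case (insert c Os)
  let ?P = "PiE V (pair_dom v)"
  define E where "E = {z \<in> ?P. \<forall>c\<in>Os. risky z c}"
  define R where "R = {z \<in> ?P. risky z c}"
  have c: "c \<in> C" using insert by auto
  have disj: "vbl c' \<inter> vbl c = {}" if "c' \<in> Os" for c'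
    using insert.prems(2) insert.hyps(2) that by blast
  have dE: "depends_only_on ?P (V - vbl c) E"
    unfolding depends_only_on_def E_def risky_def
    using disj vbl_subset insert.prems(1) by (fastforce simp: disjoint_iff)
  have dR: "depends_only_on ?P (vbl c) R" unfolding depends_only_on_def R_def risky_def by auto
  have "card (R \<inter> E) * card ?P = card R * card E"
    by (rule card_Int_independent[OF vbl_subset[OF c] _ _ dR]) (use dE in \<open>auto simp: R_def E_def\<close>)
  then have "real (card (R \<inter> E)) * card ?P = real (card R) * card E"
    by (metis of_nat_mult)
  also have "\<dots> \<le> (rho * card ?P) * (rho^card Os * card ?P)"
  proof (rule mult_mono)
    show "real (card R) \<le> rho * card ?P" unfolding R_def by (rule card_risky_le[OF c])
    show "real (card E) \<le> rho^card Os * card ?P"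
      unfolding E_def by (rule insert.IH) (use insert.prems in blast)+
  qed (simp_all add: rho_nonneg)
  finally have "real (card (R \<inter> E)) \<le> rho * rho^card Os * card ?P"
    using card_PiE_pair_dom_pos[of v] by (simp add: algebra_simps)
  moreover have "{z \<in> ?P. \<forall>c'\<in>insert c Os. risky z c'} = R \<inter> E" unfolding R_def E_def by auto
  ultimately show ?case using insert.hyps by simp
qed

lemma card_events_meeting_vbl_le:
  assumes "Os \<subseteq> C" "finite Os"
  shows "card {t \<in> C \<times> (UNIV :: bool set). vbl (fst t) \<inter> (\<Union>c\<in>Os. vbl c) \<noteq> {}} \<le> 2*k*d * card Os"
proof -
  have "card (\<Union>c\<in>Os. vbl c) \<le> (\<Sum>c\<in>Os. card (vbl c))" using assms(2) by (rule card_UN_le)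
  also have "\<dots> = k * card Os" using assms(1) card_vbl by (simp add: subset_iff)
  finally have "2 * d * card (\<Union>c\<in>Os. vbl c) \<le> 2 * d * (k * card Os)"
    by (rule mult_le_mono2)
  moreover have "card {t \<in> C \<times> (UNIV :: bool set). vbl (fst t) \<inter> (\<Union>c\<in>Os. vbl c) \<noteq> {}}
      \<le> 2 * d * card (\<Union>c\<in>Os. vbl c)"
    using assms vbl_subset finite_vbl by (intro card_events_meeting_le) auto
  ultimately have "card {t \<in> C \<times> (UNIV :: bool set). vbl (fst t) \<inter> (\<Union>c\<in>Os. vbl c) \<noteq> {}}
      \<le> 2 * d * (k * card Os)" by (rule order.trans[rotated])
  then show ?thesis by (simp add: ac_simps)
qed

lemma card_Int_coupled_le:
  assumes E: "E \<subseteq> PiE V (pair_dom v)" and Os: "Os \<subseteq> C" "finite Os"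
    and dE: "depends_only_on (PiE V (pair_dom v)) (\<Union>c\<in>Os. vbl c) E"
  shows "real (card (E \<inter> coupled v)) * card (PiE V (pair_dom v))
           \<le> 2^card Os * real (card E) * card (coupled v)"
proof -
  let ?T1 = "{t \<in> C \<times> (UNIV :: bool set). vbl (fst t) \<inter> (\<Union>c\<in>Os. vbl c) \<noteq> {}}"
  have I: "(\<Union>c\<in>Os. vbl c) \<subseteq> V" using Os vbl_subset by auto
  have "(1/2::real)^card Os \<le> ((1 - 2 * p_bad)^(2*k*d))^card Os"
    using bad_events.half_le_power[OF bad_events_violated] by (intro power_mono) auto
  also have "\<dots> \<le> (1 - 2 * p_bad)^card ?T1"
    unfolding power_mult[symmetric] using card_events_meeting_vbl_le[OF Os] p_bad_bounds
    by (intro power_decreasing) auto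
  finally have "real (card (E \<inter> coupled v)) * card (PiE V (pair_dom v)) * (1/2)^card Os
      \<le> real (card E) * card (coupled v)"
    using bad_events.card_Int_avoiding_le[OF bad_events_violated E dE I] coupled_eq_avoiding
    by (smt (verit) mult_left_mono of_nat_0_le_iff mult_nonneg_nonneg)
  then show ?thesis by (simp add: field_simps power_one_over)
qed

definition sep_chains :: "'c list set" where
  "sep_chains = {rs \<in> chains_to vbl C v0. separated vbl rs}"

lemma sep_chains_length: "rs \<in> sep_chains \<Longrightarrow> 1 \<le> length rs \<and> length rs \<le> card C"
proof -
  assume rs: "rs \<in> sep_chains"
  then have "distinct rs" "set rs \<subseteq> C" "rs \<noteq> []"
    unfolding sep_chains_def chains_to_def using separated_distinct by auto
  then show ?thesis using finite_C by (metis card_mono distinct_card length_greater_0_conv Suc_leI One_nat_def)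
qed

lemma finite_sep_chains: "finite sep_chains"
proof -
  have "sep_chains \<subseteq> {rs. set rs \<subseteq> C \<and> length rs \<le> card C}"
    using sep_chains_length unfolding sep_chains_def chains_to_def by auto
  then show ?thesis using finite_lists_length_le[OF finite_C] finite_subset by blast
qed

lemma card_coupled_risky_chain_le:
  assumes rs: "rs \<in> sep_chains"
  shows "real (card {z \<in> coupled v. \<forall>c\<in>set rs. risky z c}) \<le> (2*rho)^((length rs + 1) div 2) * card (coupled v)"
proof -
  let ?P = "PiE V (pair_dom v)"
  define Os where "Os = (\<lambda>i. rs!i) ` {i. i < length rs \<and> even i}"
  define E where "E = {z \<in> ?P. \<forall>c\<in>Os. risky z c}"
  have sep: "separated vbl rs" and OsC: "Os \<subseteq> C"
    using rs unfolding sep_chains_def chains_to_def Os_def by auto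
  have finOs: "finite Os" unfolding Os_def by simp
  note Os_props = separated_even_positions[OF sep, folded Os_def]
  have "real (card (E \<inter> coupled v)) * card ?P \<le> 2^card Os * real (card E) * card (coupled v)"
    by (rule card_Int_coupled_le[OF _ OsC finOs]) (auto simp: E_def depends_only_on_def risky_def)
  also have "\<dots> \<le> 2^card Os * (rho^card Os * card ?P) * card (coupled v)"
    using card_all_risky_le[OF finOs OsC Os_props(2)] unfolding E_def
    by (intro mult_right_mono mult_left_mono) auto
  finally have "real (card (E \<inter> coupled v)) \<le> (2*rho)^card Os * card (coupled v)"
    using card_PiE_pair_dom_pos[of v] by (simp add: power_mult_distrib algebra_simps)
  moreover have "card {z \<in> coupled v. \<forall>c\<in>set rs. risky z c} \<le> card (E \<inter> coupled v)"
    using finite_coupled unfolding E_def Os_def by (intro card_mono) (auto simp: coupled_iff)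
  ultimately show ?thesis using Os_props(1) by simp
qed

lemma card_coupled_component_le:
  assumes vv0: "v \<noteq> v0"
  shows "real (card {z \<in> coupled v. v \<in> component z})
           \<le> (\<Sum>rs\<in>{rs\<in>sep_chains. v \<in> vbl (hd rs)}. (2*rho)^((length rs + 1) div 2)) * card (coupled v)"
proof -
  let ?CH = "{rs\<in>sep_chains. v \<in> vbl (hd rs)}"
  have fin: "finite ?CH" using finite_sep_chains by simp
  have "{z \<in> coupled v. v \<in> component z} \<subseteq> (\<Union>rs\<in>?CH. {z \<in> coupled v. \<forall>c\<in>set rs. risky z c})"
  proof
    fix z assume z: "z \<in> {z \<in> coupled v. v \<in> component z}"
    then have "v \<in> component z" by simp
    then have "\<exists>rs\<in>chains_to vbl C v0. (\<forall>c\<in>set rs. risky z c) \<and> v \<in> vbl (hd rs)"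
      using vv0 by (simp add: component_def)
    then obtain rs where rs: "rs \<in> chains_to vbl C v0" "\<forall>c\<in>set rs. risky z c" "v \<in> vbl (hd rs)"
      by blast
    then obtain rs' where rs': "rs' \<in> chains_to vbl C v0" "set rs' \<subseteq> set rs" "v \<in> vbl (hd rs')"
      "separated vbl rs'"
      using exists_separated_chain[OF rs(1) rs(3)] by blast
    then have "rs' \<in> ?CH" by (simp add: sep_chains_def)
    moreover have "\<forall>c\<in>set rs'. risky z c" using rs(2) rs'(2) by blast
    ultimately show "z \<in> (\<Union>rs\<in>?CH. {z \<in> coupled v. \<forall>c\<in>set rs. risky z c})"
      using z by blast
  qed
  then have "card {z \<in> coupled v. v \<in> component z} \<le> card (\<Union>rs\<in>?CH. {z \<in> coupled v. \<forall>c\<in>set rs. risky z c})"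
    using fin finite_coupled by (intro card_mono) auto
  also have "\<dots> \<le> (\<Sum>rs\<in>?CH. card {z \<in> coupled v. \<forall>c\<in>set rs. risky z c})" using fin by (rule card_UN_le)
  finally have "real (card {z \<in> coupled v. v \<in> component z}) \<le> (\<Sum>rs\<in>?CH. real (card {z \<in> coupled v. \<forall>c\<in>set rs. risky z c}))"
    by (simp flip: of_nat_sum)
  also have "\<dots> \<le> (\<Sum>rs\<in>?CH. (2*rho)^((length rs + 1) div 2) * card (coupled v))"
    using card_coupled_risky_chain_le by (intro sum_mono) auto
  finally show ?thesis by (simp add: sum_distrib_right)
qed

end

lemma sum_power_third_le: "(\<Sum>n\<in>{1..N}. (1/3::real)^n) \<le> 1/2"
proof -
  have "(\<Sum>n\<in>{1..N}. (1/3::real)^n) = 1/2 - (1/2) * (1/3)^N"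
  proof (induction N)
    case (Suc N)
    then have "(\<Sum>n\<in>{1..Suc N}. (1/3::real)^n) = 1/2 - (1/2) * (1/3)^N + (1/3)^Suc N" by simp
    then show ?case unfolding power_Suc by linarith
  qed simp
  then show ?thesis by simp
qed

context csp_coupling
begin

lemma chain_weight_le:
  assumes c: "c \<in> C" and n: "1 \<le> n"
  shows "real (k*d)^n * (2*rho)^((n+1) div 2) \<le> (1/3)^n"
proof -
  define t where "t = real (k*d)"
  define j where "j = (n+1) div 2"
  have nj: "n \<le> 2*j" unfolding j_def by simp
  have t1: "1 \<le> t" unfolding t_def by (rule one_le_kd[OF c])
  have "rho = 1 / (18 * t^2)" unfolding rho_def t_def by simp
  then have r: "2 * rho * t^2 = 1/9" using t1 by (simp add: field_simps)
  have "t^n * (2*rho)^j \<le> t^(2*j) * (2*rho)^j"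
    using t1 nj rho_nonneg by (intro mult_right_mono power_increasing) auto
  also have "\<dots> = (2 * rho * t^2)^j" by (simp add: power_mult power_mult_distrib)
  also have "\<dots> = (1/9)^j" by (simp only: r)
  also have "(1/9::real)^j = (1/3)^(2*j)" unfolding power_mult by (simp add: power2_eq_square)
  also have "\<dots> \<le> (1/3)^n" using nj by (intro power_decreasing) auto
  finally show ?thesis unfolding t_def j_def .
qed

text \<open>Each chain is counted once for each of the at most k variables of its first constraint.\<close>

lemma sum_chains_through_le:
  assumes "\<And>rs. 0 \<le> w rs"
  shows "(\<Sum>v\<in>V - {v0}. \<Sum>rs\<in>{rs\<in>sep_chains. v \<in> vbl (hd rs)}. w rs) \<le> real k * (\<Sum>rs\<in>sep_chains. w rs)"
proof -
  have "(\<Sum>v\<in>V - {v0}. \<Sum>rs\<in>{rs\<in>sep_chains. v \<in> vbl (hd rs)}. w rs)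
      = (\<Sum>rs\<in>sep_chains. \<Sum>v\<in>V - {v0}. if v \<in> vbl (hd rs) then w rs else 0)"
    using finite_sep_chains by (simp add: sum.inter_filter sum.swap[of _ "V - {v0}"])
  also have "\<dots> = (\<Sum>rs\<in>sep_chains. real (card {v\<in>V - {v0}. v \<in> vbl (hd rs)}) * w rs)"
    using finite_V by (simp add: sum.inter_filter[symmetric])
  also have "\<dots> \<le> (\<Sum>rs\<in>sep_chains. real k * w rs)"
  proof (intro sum_mono mult_right_mono assms)
    fix rs assume "rs \<in> sep_chains"
    then have hC: "hd rs \<in> C" unfolding sep_chains_def chains_to_def by (auto intro: hd_in_set)
    have "card {v\<in>V - {v0}. v \<in> vbl (hd rs)} \<le> card (vbl (hd rs))"
      using finite_vbl[OF hC] by (intro card_mono) auto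
    then show "real (card {v\<in>V - {v0}. v \<in> vbl (hd rs)}) \<le> real k" using card_vbl[OF hC] by simp
  qed
  finally show ?thesis by (simp add: sum_distrib_left)
qed

lemma sum_sep_chains_le:
  "(\<Sum>rs\<in>sep_chains. (2*rho)^((length rs + 1) div 2))
     \<le> (\<Sum>n\<in>{1..card C}. real (d * (k*d)^(n-1)) * (2*rho)^((n + 1) div 2))"
proof -
  have "(\<Sum>rs\<in>sep_chains. (2*rho)^((length rs + 1) div 2))
      = (\<Sum>n\<in>{1..card C}. \<Sum>rs\<in>{rs\<in>sep_chains. length rs = n}. (2*rho)^((length rs + 1) div 2))"
    by (rule sum.group[symmetric]) (use finite_sep_chains sep_chains_length in auto)
  also have "\<dots> \<le> (\<Sum>n\<in>{1..card C}. real (d * (k*d)^(n-1)) * (2*rho)^((n + 1) div 2))"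
  proof (intro sum_mono)
    fix n assume n: "n \<in> {1..card C}"
    have "card {rs\<in>sep_chains. length rs = n} \<le> card {rs \<in> chains_to vbl C v0. length rs = Suc (n-1)}"
    proof (rule card_mono)
      have "{rs \<in> chains_to vbl C v0. length rs = Suc (n-1)} \<subseteq> {rs. set rs \<subseteq> C \<and> length rs = Suc (n-1)}"
        unfolding chains_to_def by auto
      then show "finite {rs \<in> chains_to vbl C v0. length rs = Suc (n-1)}"
        using finite_lists_length_eq[OF finite_C] finite_subset by blast
      show "{rs\<in>sep_chains. length rs = n} \<subseteq> {rs \<in> chains_to vbl C v0. length rs = Suc (n-1)}"
        using n unfolding sep_chains_def by auto
    qed
    also have "\<dots> \<le> d * (k*d)^(n-1)"
    proof (rule card_chains_length_le[OF finite_C])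
      show "card {c \<in> C. w \<in> vbl c} \<le> d" for w
      proof (cases "w \<in> V")
        case False
        then have "{c \<in> C. w \<in> vbl c} = {}" using vbl_subset by auto
        then show ?thesis by (simp only: card.empty zero_le)
      qed (rule degree)
    qed (simp_all add: card_vbl finite_vbl)
    finally have "real (card {rs\<in>sep_chains. length rs = n}) \<le> real (d * (k*d)^(n-1))"
      by (simp only: of_nat_le_iff)
    then show "(\<Sum>rs\<in>{rs\<in>sep_chains. length rs = n}. (2*rho)^((length rs + 1) div 2))
        \<le> real (d * (k*d)^(n-1)) * (2*rho)^((n + 1) div 2)"
      using rho_nonneg by (simp add: mult_right_mono)
  qed
  finally show ?thesis .
qed

lemma sum_chain_weights_le:
  "(\<Sum>v\<in>V - {v0}. \<Sum>rs\<in>{rs\<in>sep_chains. v \<in> vbl (hd rs)}. (2*rho)^((length rs + 1) div 2)) \<le> 1/2"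
proof (cases "C = {}")
  case True
  then have "sep_chains = {}" unfolding sep_chains_def chains_to_def by auto
  then show ?thesis by simp
next
  case False
  then obtain c where c: "c \<in> C" by auto
  have "(\<Sum>v\<in>V - {v0}. \<Sum>rs\<in>{rs\<in>sep_chains. v \<in> vbl (hd rs)}. (2*rho)^((length rs + 1) div 2))
      \<le> real k * (\<Sum>n\<in>{1..card C}. real (d * (k*d)^(n-1)) * (2*rho)^((n + 1) div 2))"
    using sum_chains_through_le[of "\<lambda>rs. (2*rho)^((length rs + 1) div 2)"] sum_sep_chains_le
      rho_nonneg arity_pos[OF c]
    by (smt (verit, best) mult_left_mono of_nat_0_le_iff zero_le_power)
  also have "\<dots> = (\<Sum>n\<in>{1..card C}. real (k*d)^n * (2*rho)^((n + 1) div 2))"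
    unfolding sum_distrib_left
  proof (rule sum.cong[OF refl])
    fix n assume "n \<in> {1..card C}"
    then have "real (k*d)^n = real (k*d) * real (k*d)^(n-1)" by (simp flip: power_Suc)
    then show "real k * (real (d * (k*d)^(n-1)) * (2*rho)^((n + 1) div 2))
        = real (k*d)^n * (2*rho)^((n + 1) div 2)" by (simp add: algebra_simps)
  qed
  also have "\<dots> \<le> (\<Sum>n\<in>{1..card C}. (1/3)^n)"
    using chain_weight_le[OF c] by (intro sum_mono) auto
  also have "\<dots> \<le> 1/2" by (rule sum_power_third_le)
  finally show ?thesis .
qed

theorem sum_dTV_cond_le_half: "(\<Sum>v\<in>V - {v0}. dTV_cond V q C vbl forb h \<Sigma> v X Y) \<le> 1/2"
proof -
  have "(\<Sum>v\<in>V - {v0}. dTV_cond V q C vbl forb h \<Sigma> v X Y)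
     \<le> (\<Sum>v\<in>V - {v0}. \<Sum>rs\<in>{rs\<in>sep_chains. v \<in> vbl (hd rs)}. (2*rho)^((length rs + 1) div 2))"
  proof (intro sum_mono)
    fix v assume v: "v \<in> V - {v0}"
    have "dTV_cond V q C vbl forb h \<Sigma> v X Y \<le> real (card {z\<in>coupled v. v \<in> component z}) / card (coupled v)"
      using v by (intro dTV_cond_le_component) auto
    also have "\<dots> \<le> (\<Sum>rs\<in>{rs\<in>sep_chains. v \<in> vbl (hd rs)}. (2*rho)^((length rs + 1) div 2))"
      using card_coupled_component_le[of v] card_coupled_pos[of v] v by (simp add: divide_le_eq)
    finally show "dTV_cond V q C vbl forb h \<Sigma> v X Y
        \<le> (\<Sum>rs\<in>{rs\<in>sep_chains. v \<in> vbl (hd rs)}. (2*rho)^((length rs + 1) div 2))" .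
  qed
  also have "\<dots> \<le> 1/2" by (rule sum_chain_weights_le)
  finally show ?thesis .
qed

end

section \<open>The entropy criterion\<close>

lemma sum_log_eq_log_prod:
  "finite S \<Longrightarrow> (\<And>i. i \<in> S \<Longrightarrow> 0 < f i) \<Longrightarrow> (\<Sum>i\<in>S. log b (f i)) = log b (\<Prod>i\<in>S. f i)"
  by (induction S rule: finite_induct) (auto simp: log_mult_pos prod_pos)

lemma le_prod_of_entropy_bound:
  fixes L :: "'v \<Rightarrow> nat" and K \<beta> :: real
  assumes S: "finite S" "card S = k" and L: "\<And>u. u \<in> S \<Longrightarrow> 0 < L u"
    and ent: "\<beta> * (\<Sum>u\<in>S. log 2 (real q)) \<le> (\<Sum>u\<in>S. log 2 (real (L u)))"
    and \<beta>: "0 < \<beta>" and cond: "(1/\<beta>) * log 2 K \<le> real k * log 2 (real q)"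
  shows "K \<le> (\<Prod>u\<in>S. real (L u))"
proof (cases "K \<le> 0")
  case True
  then show ?thesis by (smt (verit) prod_nonneg of_nat_0_le_iff)
next
  case False
  have "log 2 K = \<beta> * ((1/\<beta>) * log 2 K)" using \<beta> by simp
  also have "\<dots> \<le> \<beta> * (\<Sum>u\<in>S. log 2 (real q))" using cond \<beta> S(2) by (intro mult_left_mono) auto
  also have "\<dots> \<le> log 2 (\<Prod>u\<in>S. real (L u))"
    using ent sum_log_eq_log_prod[OF S(1), of "\<lambda>u. real (L u)" 2] L by simp
  finally show ?thesis
    using False L by (subst (asm) log_le_cancel_iff) (auto intro: prod_pos)
qed

lemma div_card_image_pos:
  assumes "h ` {..<q} = \<Sigma>" "y \<in> \<Sigma>"
  shows "0 < q div card \<Sigma>"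
proof -
  have "card \<Sigma> \<le> q" using assms(1) card_image_le[of "{..<q}" h] by auto
  moreover have "0 < card \<Sigma>" using assms by (auto simp: card_gt_0_iff)
  ultimately show ?thesis by (simp add: div_greater_zero_iff)
qed

theorem lemma8p2:
  fixes V :: "'v set" and q k d :: nat and C :: "'c set"
    and vbl :: "'c \<Rightarrow> 'v set" and forb :: "'c \<Rightarrow> 'v \<Rightarrow> nat"
    and h :: "'v \<Rightarrow> nat \<Rightarrow> 'y" and \<Sigma> :: "'v \<Rightarrow> 'y set"
    and \<alpha> \<beta> :: real and X Y :: "'v \<Rightarrow> 'y" and v0 :: 'v
  assumes finV: "finite V" and finC: "finite C"
    and vbl_sub: "\<And>c. c \<in> C \<Longrightarrow> vbl c \<subseteq> V"
    and vbl_card: "\<And>c. c \<in> C \<Longrightarrow> card (vbl c) = k"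
    and forb_dom: "\<And>c v. c \<in> C \<Longrightarrow> v \<in> vbl c \<Longrightarrow> forb c v < q"
    and deg: "\<And>v. v \<in> V \<Longrightarrow> card {c \<in> C. v \<in> vbl c} \<le> d"
    and proj: "\<And>v. v \<in> V \<Longrightarrow> h v ` {..<q} = \<Sigma> v"
    and fiber: "\<And>v y. v \<in> V \<Longrightarrow> y \<in> \<Sigma> v \<Longrightarrow>
        q div card (\<Sigma> v) \<le> card {a \<in> {..<q}. h v a = y} \<and>
        real (card {a \<in> {..<q}. h v a = y}) \<le> real_of_int \<lceil>real q / real (card (\<Sigma> v))\<rceil>"
    and ent_up: "\<And>c. c \<in> C \<Longrightarrow>
        (\<Sum>v\<in>vbl c. log 2 (real_of_int \<lceil>real q / real (card (\<Sigma> v))\<rceil>))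
          \<le> \<alpha> * (\<Sum>v\<in>vbl c. log 2 (real q))"
    and ent_low: "\<And>c. c \<in> C \<Longrightarrow>
        (\<Sum>v\<in>vbl c. log 2 (real (q div card (\<Sigma> v))))
          \<ge> \<beta> * (\<Sum>v\<in>vbl c. log 2 (real q))"
    and \<beta>pos: "0 < \<beta>" and \<beta>\<alpha>: "\<beta> < \<alpha>" and \<alpha>1: "\<alpha> < 1"
    and cond: "real k * log 2 (real q)
        \<ge> (1 / \<beta>) * log 2 (3000 * real q ^ 2 * real d ^ 6 * real k ^ 6)"
    and X: "X \<in> PiE V \<Sigma>" and Y: "Y \<in> PiE V \<Sigma>"
    and v0: "v0 \<in> V" and XY: "\<And>u. u \<in> V - {v0} \<Longrightarrow> X u = Y u"
  shows "(\<Sum>v\<in>V - {v0}. dTV_cond V q C vbl forb h \<Sigma> v X Y) \<le> 1 / 2"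
proof (cases "C \<noteq> {} \<and> k = 0")
  case True
  then obtain c where "c \<in> C" "vbl c = {}"
    using vbl_card vbl_sub finV by (metis all_not_in_conv card_0_eq finite_subset)
  then have "sat_assign V q C vbl forb = {}" unfolding sat_assign_def by auto
  then show ?thesis by (simp add: dTV_cond_def nu_cond_def)
next
  case False
  have XY_in: "\<sigma> u \<in> \<Sigma> u" if "u \<in> V" "\<sigma> \<in> {X, Y}" for u \<sigma>
    using that X Y by (auto simp: PiE_iff)
  have m_pos: "0 < q div card (\<Sigma> u)" if "u \<in> V" for u
    using div_card_image_pos[OF proj XY_in] that by blast
  interpret csp_coupling V q k d C vbl forb h "\<lambda>u. q div card (\<Sigma> u)" X Y v0
  proof
    show "3000 * real q ^ 2 * real d ^ 6 * real k ^ 6 \<le> (\<Prod>u\<in>vbl c. real (q div card (\<Sigma> u)))"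
      if c: "c \<in> C" for c
      by (rule le_prod_of_entropy_bound[OF finite_subset[OF vbl_sub[OF c] finV] vbl_card[OF c] _
            ent_low[OF c] \<beta>pos cond])
        (use m_pos vbl_sub[OF c] in blast)
  qed (use assms False fiber XY_in m_pos in auto)
  show ?thesis by (rule sum_dTV_cond_le_half)
qed

end
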